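(* Under the assumptions that: $\phi(\theta,y)$ is three times continuously differentiable in $\theta$ with third derivatives locally (near $\theta_0$) dominated by an $f^*$-integrable function; $\psi(g^\theta,y)$ is twice continuously differentiable in $\theta$ with second derivatives locally dominated by an $f^*$-integrable function; $\theta_0=\arg\min\Phi_\infty$ is interior with $\mathrm E_*\{\partial^2\phi(\theta_0,Y)/\partial\theta\partial\theta^T\}$ positive definite; $\hat\theta$ and all $\hat\theta_{-i}$ exist, are interior, and satisfy $\hat\theta-\theta_0=O_p(n^{-1/2})$, $\max_i\|\hat\theta_{-i}-\theta_0\|=O_p(n^{-1/2})$; and $\max_i\|\partial\phi(\hat\theta,Y_i)/\partial\theta\|$, $\max_i\|\partial\psi(g^{\hat\theta},Y_i)/\partial\theta\|$ are $O_p(1)$, the leave-one-out crossvalidation criterion satisfies $$\mathrm{CV}(g^{\hat\theta})=\mathrm{UACV}(g^{\hat\theta})+O_p(n^{-2}),\qquad \mathrm{UACV}(g^{\hat\theta})=\Psi(g^{\hat\theta})+\mathrm{Trace}\big(H_{\Phi_{\bar{\mathcal O}_n}}^{-1}K\big),$$ where $\Psi(g^{\hat\theta})=n^{-1}\sum_{i=1}^n\psi(g^{\hat\theta},Y_i)$, $K=n^{-1}\sum_{i=1}^n\hat v_i\hat d_i^T$, $\hat v_i=\frac{\partial\psi(g^\theta,Y_i)}{\partial\theta}\big|_{\hat\theta}$, $\hat d_i=\frac{1}{n-1}\frac{\partial\phi(\theta,Y_i)}{\partial\theta}\big|_{\hat\theta}$, and $H_{\Phi_{\bar{\mathcal O}_n}}=\frac{\partial^2\Phi_{\bar{\mathcal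 O}_n}}{\partial\theta\partial\theta^T}\big|_{\hat\theta}$.
   Context: $Y_1,\dots,Y_n$ i.i.d. with true density $f^*$; $\mathrm E_*$ denotes expectation under $f^*$. $(g^\theta)_{\theta\in\Theta}$, $\Theta\subset\mathbb R^p$, is a parametric family of densities. The estimating function is $\Phi_{\bar{\mathcal O}_n}(\theta)=n^{-1}\sum_{i=1}^n\phi(\theta,Y_i)$, $\hat\theta=\arg\min_\theta\Phi_{\bar{\mathcal O}_n}$, $\Phi_\infty(\theta)=\mathrm E_*\{\phi(\theta,Y)\}$; $\Phi_{\bar{\mathcal O}_{n|i}}(\theta)=\frac{1}{n-1}\sum_{j\neq i}\phi(\theta,Y_j)$ and $\hat\theta_{-i}=\arg\min_\theta\Phi_{\bar{\mathcal O}_{n|i}}$. The assessment loss is $\psi(g^\theta,y)$, and $\mathrm{CV}(g^{\hat\theta})=n^{-1}\sum_{i=1}^n\psi(g^{\hat\theta_{-i}},Y_i)$ is the leave-one-out crossvalidation criterion. *)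

theory Defs
  imports "HOL-Probability.Probability"
begin

text \<open>Stochastic boundedness, stated with inner probability so that no
measurability of the random quantities is required:
X n = O_p(r n) iff for every e > 0 there are K and N such that for all n \<ge> N
there is an event of probability at least 1 - e on which |X n| \<le> K * r n.\<close>
definition bigOp :: "'a measure \<Rightarrow> (nat \<Rightarrow> 'a \<Rightarrow> real) \<Rightarrow> (nat \<Rightarrow> real) \<Rightarrow> bool" where
  "bigOp M X r \<longleftrightarrow>
     (\<forall>e>0. \<exists>K N. \<forall>n\<ge>N. \<exists>A\<in>sets M. measure M A \<ge> 1 - e \<and>
        (\<forall>\<omega>\<in>A. \<bar>X n \<omega>\<bar> \<le> K * r n))"

definition PhiEmp :: "('p \<Rightarrow> 'y \<Rightarrow> real) \<Rightarrow> (nat \<Rightarrow> 'a \<Rightarrow> 'y) \<Rightarrow> nat \<Rightarrow> 'a \<Rightarrow> 'p \<Rightarrow> real" where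
  "PhiEmp phi Y n \<omega> \<theta> = (1 / real n) * (\<Sum>i<n. phi \<theta> (Y i \<omega>))"

definition PhiLoo :: "('p \<Rightarrow> 'y \<Rightarrow> real) \<Rightarrow> (nat \<Rightarrow> 'a \<Rightarrow> 'y) \<Rightarrow> nat \<Rightarrow> nat \<Rightarrow> 'a \<Rightarrow> 'p \<Rightarrow> real" where
  "PhiLoo phi Y n i \<omega> \<theta> = (1 / (real n - 1)) * (\<Sum>j\<in>{..<n} - {i}. phi \<theta> (Y j \<omega>))"

definition CV :: "(('y \<Rightarrow> real) \<Rightarrow> 'y \<Rightarrow> real) \<Rightarrow> ('p \<Rightarrow> 'y \<Rightarrow> real) \<Rightarrow> (nat \<Rightarrow> 'a \<Rightarrow> 'y)
                 \<Rightarrow> (nat \<Rightarrow> nat \<Rightarrow> 'a \<Rightarrow> 'p) \<Rightarrow> nat \<Rightarrow> 'a \<Rightarrow> real" where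
  "CV psi g Y loo n \<omega> = (1 / real n) * (\<Sum>i<n. psi (g (loo n i \<omega>)) (Y i \<omega>))"

text \<open>UACV(g^{hat theta}) = Psi(g^{hat theta}) + Trace(H^{-1} K), where
 Dphi / Hphi are the gradient / Hessian of phi in theta and Dpsi the gradient
 of theta \<mapsto> psi(g^theta, y).\<close>
definition UACV :: "(('y \<Rightarrow> real) \<Rightarrow> 'y \<Rightarrow> real) \<Rightarrow> (real^'p::finite \<Rightarrow> 'y \<Rightarrow> real)
     \<Rightarrow> (real^'p \<Rightarrow> 'y \<Rightarrow> real^'p) \<Rightarrow> (real^'p \<Rightarrow> 'y \<Rightarrow> real^'p)
     \<Rightarrow> (real^'p \<Rightarrow> 'y \<Rightarrow> real^'p^'p)
     \<Rightarrow> (nat \<Rightarrow> 'a \<Rightarrow> 'y) \<Rightarrow> (nat \<Rightarrow> 'a \<Rightarrow> real^'p) \<Rightarrow> nat \<Rightarrow> 'a \<Rightarrow> real" where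
  "UACV psi g Dpsi Dphi Hphi Y hat n \<omega> =
    (let th = hat n \<omega>;
         Psi = (1 / real n) * (\<Sum>i<n. psi (g th) (Y i \<omega>));
         v = (\<lambda>i. Dpsi th (Y i \<omega>));
         d = (\<lambda>i. (1 / (real n - 1)) *\<^sub>R Dphi th (Y i \<omega>));
         K = (\<chi> a b. (1 / real n) * (\<Sum>i<n. v i $ a * d i $ b));
         H = (1 / real n) *\<^sub>R (\<Sum>i<n. Hphi th (Y i \<omega>))
     in Psi + trace (matrix_inv H ** K))"

end

theory Submission
  imports Defs "HOL-Real_Asymp.Real_Asymp"
begin

text \<open>
  For one sample, expand the first-order condition of each leave-one-out
  estimate \<open>\<theta>\<^sub>-\<^sub>i\<close> around the full-sample estimate \<open>\<theta>\<close>:  with the mean Hessian \<open>H\<close>,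
  \<open>H (\<theta>\<^sub>-\<^sub>i - \<theta>) = d\<^sub>i + O(n\<^sup>-\<^sup>2)\<close>, \<open>d\<^sub>i = \<partial>\<phi>(\<theta>, Y\<^sub>i)/(n - 1)\<close>, so \<open>\<theta>\<^sub>-\<^sub>i - \<theta> = O(n\<^sup>-\<^sup>1)\<close>, and a
  second-order expansion of \<open>\<psi>\<close> gives \<open>\<psi>(g\<^sup>\<theta>\<^sup>-\<^sup>i, Y\<^sub>i) = \<psi>(g\<^sup>\<theta>, Y\<^sub>i) + d\<^sub>i \<bullet> H\<^sup>-\<^sup>1 v\<^sub>i + O(n\<^sup>-\<^sup>2)\<close>.
  Averaging over \<open>i\<close> yields \<open>CV = \<Psi> + trace (H\<^sup>-\<^sup>1 K) + O(n\<^sup>-\<^sup>2)\<close>.  This is a purely deterministic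
  statement (locale \<open>loo_sample\<close>), valid whenever a list of bounds holds.  The probabilistic part
  shows that, for every \<open>e > 0\<close>, these bounds hold with one constant on an event of probability
  at least \<open>1 - e\<close> for all large \<open>n\<close> (the "good event"): the rate hypotheses, Markov's inequality,
  an \<open>o(n)\<close> bound for maxima of i.i.d.\ integrable variables and a weak law of large numbers
  (Hoeffding plus truncation) for the Hessian at \<open>\<theta>\<^sub>0\<close>.
\<close>

section \<open>Events of high probability\<close>

definition whp :: "'a measure \<Rightarrow> real \<Rightarrow> (nat \<Rightarrow> 'a \<Rightarrow> bool) \<Rightarrow> bool" where
  "whp M e P \<longleftrightarrow> (\<exists>N. \<forall>n\<ge>N. \<exists>A\<in>sets M. measure M A \<ge> 1 - e \<and> (\<forall>\<omega>\<in>A. P n \<omega>))"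

lemma bigOp_iff_whp: "bigOp M X r \<longleftrightarrow> (\<forall>e>0. \<exists>K. whp M e (\<lambda>n \<omega>. \<bar>X n \<omega>\<bar> \<le> K * r n))"
  unfolding bigOp_def whp_def by blast

lemma whp_mono:
  assumes "whp M e P" "e \<le> e'"
    and "\<And>n \<omega>. n \<ge> N0 \<Longrightarrow> \<omega> \<in> space M \<Longrightarrow> P n \<omega> \<Longrightarrow> Q n \<omega>"
  shows "whp M e' Q"
proof -
  obtain N where N: "\<forall>n\<ge>N. \<exists>A\<in>sets M. measure M A \<ge> 1 - e \<and> (\<forall>\<omega>\<in>A. P n \<omega>)"
    using assms(1) unfolding whp_def by blast
  show ?thesis unfolding whp_def
  proof (intro exI allI impI)
    fix n assume n: "max N N0 \<le> n"
    obtain A where A: "A \<in> sets M" "measure M A \<ge> 1 - e" "\<forall>\<omega>\<in>A. P n \<omega>" using N n by auto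
    have "A \<subseteq> space M" using A(1) sets.sets_into_space by blast
    then show "\<exists>A\<in>sets M. measure M A \<ge> 1 - e' \<and> (\<forall>\<omega>\<in>A. Q n \<omega>)"
      using A n assms(2,3) by (intro bexI[of _ A]) auto
  qed
qed

lemma bigOp_whp_bound:
  assumes "bigOp M X r" "e > 0"
  shows "\<exists>K. whp M e (\<lambda>n \<omega>. X n \<omega> \<le> K * r n)"
proof -
  obtain K where "whp M e (\<lambda>n \<omega>. \<bar>X n \<omega>\<bar> \<le> K * r n)" using assms unfolding bigOp_iff_whp by blast
  then have "whp M e (\<lambda>n \<omega>. X n \<omega> \<le> K * r n)" by (rule whp_mono) auto
  then show ?thesis by blast
qed

context prob_space
begin

lemma whp_True: "whp M 0 (\<lambda>n \<omega>. True)"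
  unfolding whp_def by (intro exI[of _ 0] allI impI bexI[of _ "space M"]) (auto simp: prob_space)

lemma whp_conj:
  assumes "whp M e1 P" "whp M e2 Q"
  shows "whp M (e1 + e2) (\<lambda>n \<omega>. P n \<omega> \<and> Q n \<omega>)"
proof -
  obtain N1 where N1: "\<forall>n\<ge>N1. \<exists>A\<in>sets M. measure M A \<ge> 1 - e1 \<and> (\<forall>\<omega>\<in>A. P n \<omega>)"
    using assms(1) unfolding whp_def by blast
  obtain N2 where N2: "\<forall>n\<ge>N2. \<exists>A\<in>sets M. measure M A \<ge> 1 - e2 \<and> (\<forall>\<omega>\<in>A. Q n \<omega>)"
    using assms(2) unfolding whp_def by blast
  show ?thesis unfolding whp_def
  proof (intro exI allI impI)
    fix n assume n: "max N1 N2 \<le> n"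
    obtain A where A: "A \<in> sets M" "measure M A \<ge> 1 - e1" "\<forall>\<omega>\<in>A. P n \<omega>" using N1 n by auto
    obtain B where B: "B \<in> sets M" "measure M B \<ge> 1 - e2" "\<forall>\<omega>\<in>B. Q n \<omega>" using N2 n by auto
    have "measure M (A \<union> B) = measure M A + measure M B - measure M (A \<inter> B)"
      using A B by (intro measure_Un3) (auto simp: fmeasurable_def less_top[symmetric])
    moreover have "measure M (A \<union> B) \<le> 1" by simp
    ultimately have "measure M (A \<inter> B) \<ge> 1 - (e1 + e2)" using A B by linarith
    then show "\<exists>C\<in>sets M. measure M C \<ge> 1 - (e1 + e2) \<and> (\<forall>\<omega>\<in>C. P n \<omega> \<and> Q n \<omega>)"
      using A B by (intro bexI[of _ "A \<inter> B"]) auto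
  qed
qed

definition wp_to_one :: "(nat \<Rightarrow> 'a \<Rightarrow> bool) \<Rightarrow> bool" where
  "wp_to_one P \<longleftrightarrow> (\<forall>e>0. whp M e P)"

lemma wp_to_one_finite_Ball:
  assumes "finite I" and "\<And>i. i \<in> I \<Longrightarrow> wp_to_one (Q i)"
  shows "wp_to_one (\<lambda>n \<omega>. \<forall>i\<in>I. Q i n \<omega>)"
  using assms
proof (induction I rule: finite_induct)
  case empty
  show ?case unfolding wp_to_one_def
    by (intro allI impI whp_mono[OF whp_True, where ?N0.0=0]) auto
next
  case (insert x F)
  have "whp M e (\<lambda>n \<omega>. Q x n \<omega> \<and> (\<forall>i\<in>F. Q i n \<omega>))" if "e > 0" for e
    using whp_conj[of "e/2" "Q x" "e/2"] insert that unfolding wp_to_one_def by simp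
  then show ?case unfolding wp_to_one_def by simp
qed

end

section \<open>Matrices\<close>

text \<open>The entrywise \<open>\<ell>\<^sub>1\<close> norm of a matrix.  It dominates the operator norm and is convenient for
  bounding averages of random matrices entry by entry.\<close>
definition entry_norm :: "real^'n^'m \<Rightarrow> real" where
  "entry_norm B = (\<Sum>i\<in>UNIV. \<Sum>j\<in>UNIV. \<bar>B $ i $ j\<bar>)"

lemma entry_norm_nonneg: "entry_norm B \<ge> 0"
  unfolding entry_norm_def by (intro sum_nonneg) auto

lemma entry_norm_triangle: "entry_norm (B + C) \<le> entry_norm B + entry_norm C"
  unfolding entry_norm_def by (simp add: sum.distrib[symmetric] sum_mono abs_triangle_ineq)

lemma entry_norm_scaleR: "entry_norm (c *\<^sub>R B) = \<bar>c\<bar> * entry_norm B"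
  unfolding entry_norm_def by (simp add: abs_mult sum_distrib_left)

lemma entry_norm_sum: "finite I \<Longrightarrow> entry_norm (\<Sum>k\<in>I. B k) \<le> (\<Sum>k\<in>I. entry_norm (B k))"
proof (induction I rule: finite_induct)
  case empty then show ?case by (simp add: entry_norm_def)
next
  case (insert x F)
  then show ?case using entry_norm_triangle[of "B x" "\<Sum>k\<in>F. B k"] by simp
qed

lemma entry_norm_le_const:
  assumes "\<And>i j. \<bar>B $ i $ j\<bar> \<le> m"
  shows "entry_norm (B :: real^'n^'m) \<le> real CARD('m) * real CARD('n) * m"
proof -
  have "entry_norm B \<le> (\<Sum>i\<in>(UNIV::'m set). \<Sum>j\<in>(UNIV::'n set). m)"
    unfolding entry_norm_def by (intro sum_mono assms)
  then show ?thesis by simp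
qed

text \<open>Comparison with the Euclidean norm of the matrix viewed as a vector of rows.\<close>
lemma norm_le_entry_norm: "norm B \<le> entry_norm B"
proof -
  have "norm B \<le> (\<Sum>i\<in>UNIV. norm (B $ i))" unfolding norm_vec_def by (rule L2_set_le_sum) auto
  also have "\<dots> \<le> (\<Sum>i\<in>UNIV. \<Sum>j\<in>UNIV. \<bar>B $ i $ j\<bar>)"
    by (intro sum_mono norm_le_l1_cart)
  finally show ?thesis unfolding entry_norm_def .
qed

lemma entry_norm_le_norm: "entry_norm (B :: real^'n^'m) \<le> real CARD('m) * real CARD('n) * norm B"
proof (rule entry_norm_le_const)
  fix i j
  have "\<bar>B $ i $ j\<bar> \<le> norm (B $ i)" by (rule component_le_norm_cart)
  also have "\<dots> \<le> norm B" unfolding norm_vec_def[of B] by (rule member_le_L2_set) simp_all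
  finally show "\<bar>B $ i $ j\<bar> \<le> norm B" .
qed

lemma norm_matrix_vector_le: "norm (B *v x) \<le> entry_norm B * norm x"
proof -
  have "norm (B *v x) \<le> (\<Sum>i\<in>UNIV. \<bar>(B *v x) $ i\<bar>)" by (rule norm_le_l1_cart)
  also have "\<dots> \<le> (\<Sum>i\<in>UNIV. \<Sum>j\<in>UNIV. \<bar>B $ i $ j\<bar> * norm x)"
  proof (intro sum_mono)
    fix i
    have "\<bar>(B *v x) $ i\<bar> \<le> (\<Sum>j\<in>UNIV. \<bar>B $ i $ j * x $ j\<bar>)"
      unfolding matrix_vector_mult_def by (simp add: sum_abs)
    also have "\<dots> \<le> (\<Sum>j\<in>UNIV. \<bar>B $ i $ j\<bar> * norm x)"
      by (intro sum_mono) (simp add: abs_mult mult_left_mono component_le_norm_cart)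
    finally show "\<bar>(B *v x) $ i\<bar> \<le> (\<Sum>j\<in>UNIV. \<bar>B $ i $ j\<bar> * norm x)" .
  qed
  also have "\<dots> = entry_norm B * norm x" unfolding entry_norm_def by (simp add: sum_distrib_right)
  finally show ?thesis .
qed

lemma onorm_matrix_le: "onorm (\<lambda>h. B *v h) \<le> entry_norm B"
  by (rule onorm_le) (rule norm_matrix_vector_le)

lemma matrix_vector_mult_sum: "finite I \<Longrightarrow> (\<Sum>k\<in>I. B k) *v (x :: real^'p) = (\<Sum>k\<in>I. B k *v x)"
  by (induction I rule: finite_induct) (auto simp: matrix_vector_mult_add_rdistrib)

lemma pos_def_uniform:
  fixes E :: "real^'p^'p"
  assumes pd: "\<And>x. x \<noteq> 0 \<Longrightarrow> x \<bullet> (E *v x) > 0"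
  shows "\<exists>c>0. \<forall>x. x \<bullet> (E *v x) \<ge> c * (norm x)\<^sup>2"
proof -
  define q where "q x = x \<bullet> (E *v x)" for x :: "real^'p"
  have "continuous_on (sphere 0 1) q" unfolding q_def
    by (intro continuous_intros linear_continuous_on matrix_vector_mul_bounded_linear)
  moreover have "sphere (0::real^'p) 1 \<noteq> {}" by simp
  ultimately obtain u where u: "u \<in> sphere 0 1" "\<forall>y\<in>sphere 0 1. q u \<le> q y"
    using continuous_attains_inf[OF compact_sphere] by blast
  have "u \<noteq> 0" using u(1) by auto
  then have "q u > 0" unfolding q_def by (rule pd)
  moreover have "x \<bullet> (E *v x) \<ge> q u * (norm x)\<^sup>2" for x
  proof (cases "x = 0")
    case False
    define w where "w = (1 / norm x) *\<^sub>R x"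
    have w: "w \<in> sphere 0 1" unfolding w_def using False by simp
    have "x \<bullet> (E *v x) = (norm x)\<^sup>2 * q w"
      unfolding q_def w_def using False by (simp add: matrix_vector_mult_scaleR power2_eq_square)
    also have "\<dots> \<ge> (norm x)\<^sup>2 * q u" using u(2) w by (intro mult_left_mono) auto
    finally show ?thesis by (simp add: ac_simps)
  qed simp
  ultimately show ?thesis by blast
qed

lemma pos_def_perturb:
  fixes E H :: "real^'p^'p"
  assumes pd: "\<And>x. x \<bullet> (E *v x) \<ge> c * (norm x)\<^sup>2" and close: "entry_norm (H - E) \<le> c / 2"
  shows "x \<bullet> (H *v x) \<ge> (c / 2) * (norm x)\<^sup>2"
proof -
  have "\<bar>x \<bullet> ((H - E) *v x)\<bar> \<le> norm x * norm ((H - E) *v x)" by (rule Cauchy_Schwarz_ineq2)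
  also have "\<dots> \<le> norm x * (entry_norm (H - E) * norm x)"
    by (intro mult_left_mono norm_matrix_vector_le) simp
  also have "\<dots> \<le> norm x * ((c / 2) * norm x)"
    by (intro mult_left_mono mult_right_mono close) simp_all
  also have "\<dots> = (c / 2) * (norm x)\<^sup>2" by (simp add: power2_eq_square)
  finally have "\<bar>x \<bullet> ((H - E) *v x)\<bar> \<le> (c / 2) * (norm x)\<^sup>2" .
  moreover have "x \<bullet> (H *v x) = x \<bullet> (E *v x) + x \<bullet> ((H - E) *v x)"
    by (simp add: matrix_vector_mult_diff_rdistrib inner_diff_right)
  ultimately show ?thesis using pd[of x] by linarith
qed

lemma pos_def_matrix_inv:
  fixes B :: "real^'n^'n"
  assumes c: "c > 0" and pd: "\<And>x. x \<bullet> (B *v x) \<ge> c * (norm x)\<^sup>2"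
  shows "B ** matrix_inv B = mat 1" "matrix_inv B ** B = mat 1"
    and "norm (matrix_inv B *v y) \<le> norm y / c"
proof -
  have "\<forall>x. B *v x = 0 \<longrightarrow> x = 0"
  proof (intro allI impI)
    fix x assume "B *v x = 0"
    then have "c * (norm x)\<^sup>2 \<le> 0" using pd[of x] by simp
    then show "x = 0" using c by (simp add: mult_le_0_iff)
  qed
  then obtain B' where B': "B' ** B = mat 1" using matrix_left_invertible_ker by blast
  then have "\<exists>A'. B ** A' = mat 1 \<and> A' ** B = mat 1" using matrix_left_right_inverse by blast
  then have inv: "B ** matrix_inv B = mat 1 \<and> matrix_inv B ** B = mat 1"
    unfolding matrix_inv_def by (rule someI_ex)
  then show "B ** matrix_inv B = mat 1" "matrix_inv B ** B = mat 1" by auto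
  define x where "x = matrix_inv B *v y"
  have "B *v x = y" unfolding x_def using inv by (simp add: matrix_vector_mul_assoc)
  then have "c * (norm x)\<^sup>2 \<le> x \<bullet> y" using pd[of x] by simp
  also have "\<dots> \<le> norm x * norm y" by (rule order_trans[OF abs_ge_self Cauchy_Schwarz_ineq2])
  finally have "c * (norm x)\<^sup>2 \<le> norm x * norm y" .
  then have "c * norm x \<le> norm y" by (cases "x = 0") (auto simp: power2_eq_square)
  then show "norm (matrix_inv B *v y) \<le> norm y / c" unfolding x_def[symmetric] using c
    by (simp add: field_simps)
qed

lemma matrix_inv_symmetric:
  fixes B :: "real^'n^'n"
  assumes sym: "transpose B = B" and l: "matrix_inv B ** B = mat 1" and r: "B ** matrix_inv B = mat 1"
  shows "transpose (matrix_inv B) = matrix_inv B"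
proof -
  define A where "A = matrix_inv B"
  have At: "transpose A ** B = mat 1"
    using r sym unfolding A_def by (metis matrix_transpose_mul transpose_mat)
  have "transpose A = transpose A ** (B ** A)" using r unfolding A_def by simp
  also have "\<dots> = A" using At by (simp add: matrix_mul_assoc)
  finally show ?thesis unfolding A_def .
qed

lemma symmetric_inner_swap:
  fixes A :: "real^'n^'n"
  assumes "transpose A = A"
  shows "d \<bullet> (A *v v) = (A *v d) \<bullet> v"
  by (metis assms dot_lmul_matrix vector_transpose_matrix)

lemma trace_outer_products:
  fixes A :: "real^'p^'p" and v d :: "nat \<Rightarrow> real^'p"
  shows "trace (A ** (\<chi> a b. c * (\<Sum>i<n. v i $ a * d i $ b))) = c * (\<Sum>i<n. d i \<bullet> (A *v v i))"
proof -
  have "trace (A ** (\<chi> a b. c * (\<Sum>i<n. v i $ a * d i $ b)))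
      = c * (\<Sum>a\<in>UNIV. \<Sum>k\<in>UNIV. \<Sum>i<n. d i $ a * (A $ a $ k * v i $ k))"
    by (simp add: trace_def matrix_matrix_mult_def sum_distrib_left mult_ac)
  also have "\<dots> = c * (\<Sum>i<n. \<Sum>a\<in>UNIV. \<Sum>k\<in>UNIV. d i $ a * (A $ a $ k * v i $ k))"
    by (subst sum.swap, subst (2) sum.swap) (simp add: sum.swap[of _ "{..<n}"])
  also have "\<dots> = c * (\<Sum>i<n. d i \<bullet> (A *v v i))"
    by (simp add: inner_vec_def matrix_vector_mult_def sum_distrib_left)
  finally show ?thesis .
qed

section \<open>Differential calculus\<close>

lemma linearization_remainder:
  fixes f :: "real^'p \<Rightarrow> 'b::real_normed_vector"
  assumes S: "convex S" "t \<in> S" "s \<in> S"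
    and fd: "\<And>x. x \<in> S \<Longrightarrow> (f has_derivative f' x) (at x)"
    and lip: "\<And>x. x \<in> S \<Longrightarrow> onorm (\<lambda>h. f' x h - f' t h) \<le> L * norm (x - t)"
    and L: "L \<ge> 0"
  shows "norm (f s - f t - f' t (s - t)) \<le> L * (norm (s - t))\<^sup>2"
proof -
  define T where "T = closed_segment t s"
  have TS: "T \<subseteq> S" unfolding T_def using S closed_segment_subset by blast
  have "norm (f s - f t - f' t (s - t)) \<le> norm (s - t) * (L * norm (s - t))"
  proof (rule differentiable_bound_linearization[where S=T])
    show "\<And>u. u \<in> {0..1} \<Longrightarrow> t + u *\<^sub>R (s - t) \<in> T"
      unfolding T_def in_segment by (auto intro!: exI simp: algebra_simps)
    show "\<And>x. x \<in> T \<Longrightarrow> (f has_derivative f' x) (at x within T)"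
      using fd TS by (auto intro: has_derivative_at_withinI)
    show "onorm (f' x - f' t) \<le> L * norm (s - t)" if x: "x \<in> T" for x
    proof -
      have "onorm (f' x - f' t) \<le> L * norm (x - t)"
        using lip[of x] x TS by (auto simp: fun_diff_def)
      also have "\<dots> \<le> L * norm (s - t)" using segment_bound1[of x t s] x L unfolding T_def
        by (intro mult_left_mono) auto
      finally show ?thesis .
    qed
  qed (simp add: T_def)
  then show ?thesis by (simp add: power2_eq_square ac_simps)
qed

lemma lipschitz_of_derivative_bound:
  fixes f :: "real^'p \<Rightarrow> 'b::real_normed_vector"
  assumes "convex S" "t \<in> S" "s \<in> S"
    and "\<And>x. x \<in> S \<Longrightarrow> (f has_derivative f' x) (at x)"
    and "\<And>x. x \<in> S \<Longrightarrow> onorm (f' x) \<le> B"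
  shows "norm (f s - f t) \<le> B * norm (s - t)"
  using assms by (intro differentiable_bound[of S f f' B s t]) (auto intro: has_derivative_at_withinI)

lemma onorm_tensor_le:
  fixes T :: "real^'p \<Rightarrow> real^'p^'p"
  assumes lin: "bounded_linear T" and bd: "\<And>i j k. \<bar>T (axis k 1) $ i $ j\<bar> \<le> m"
  shows "onorm T \<le> real CARD('p)^3 * m"
proof (rule onorm_le)
  fix h :: "real^'p"
  have "T h = T (\<Sum>k\<in>UNIV. h $ k *\<^sub>R axis k 1)"
    using basis_expansion[of h] by (simp add: scalar_mult_eq_scaleR)
  also have "\<dots> = (\<Sum>k\<in>UNIV. h $ k *\<^sub>R T (axis k 1))"
    using bounded_linear.linear[OF lin] by (simp add: linear_sum linear_scale)
  finally have Th: "T h = (\<Sum>k\<in>UNIV. h $ k *\<^sub>R T (axis k 1))" .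
  have "\<bar>T h $ i $ j\<bar> \<le> (\<Sum>k\<in>(UNIV::'p set). norm h * m)" for i j
  proof -
    have "\<bar>T h $ i $ j\<bar> \<le> (\<Sum>k\<in>UNIV. \<bar>h $ k * T (axis k 1) $ i $ j\<bar>)"
      unfolding Th by (simp add: sum_component sum_abs)
    also have "\<dots> \<le> (\<Sum>k\<in>(UNIV::'p set). norm h * m)"
      unfolding abs_mult by (rule sum_mono, rule mult_mono[OF component_le_norm_cart bd]) simp_all
    finally show ?thesis .
  qed
  then have "entry_norm (T h) \<le> real CARD('p) * real CARD('p) * (real CARD('p) * (norm h * m))"
    by (intro entry_norm_le_const) simp
  then show "norm (T h) \<le> real CARD('p)^3 * m * norm h"
    using norm_le_entry_norm[of "T h"] by (simp add: power3_eq_cube ac_simps)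
qed

lemma gradient_zero_at_min:
  fixes F :: "real^'p \<Rightarrow> real"
  assumes d: "(F has_derivative (\<lambda>h. G \<bullet> h)) (at x)" and x: "x \<in> interior \<Theta>"
    and m: "\<And>\<theta>. \<theta> \<in> \<Theta> \<Longrightarrow> F x \<le> F \<theta>"
  shows "G = 0"
proof -
  have "eventually (\<lambda>y. y \<in> interior \<Theta>) (at x)"
    using x by (intro eventually_at_in_open') auto
  then have "eventually (\<lambda>y. F x \<le> F y) (at x)"
    by eventually_elim (use m interior_subset in blast)
  then have "(\<lambda>h. G \<bullet> h) = (\<lambda>h. 0)" by (rule has_derivative_local_min[OF d])
  then show ?thesis by (metis inner_eq_zero_iff)
qed

lemma gradient_sum_zero:
  fixes f :: "nat \<Rightarrow> real^'p \<Rightarrow> real"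
  assumes fin: "finite I" and x: "x \<in> interior \<Theta>" and a: "a \<noteq> 0"
    and d: "\<And>k. k \<in> I \<Longrightarrow> (f k has_derivative (\<lambda>h. G k \<bullet> h)) (at x)"
    and min: "\<And>\<theta>. \<theta> \<in> \<Theta> \<Longrightarrow> a * (\<Sum>k\<in>I. f k x) \<le> a * (\<Sum>k\<in>I. f k \<theta>)"
  shows "(\<Sum>k\<in>I. G k) = 0"
proof -
  have "((\<lambda>\<theta>. a * (\<Sum>k\<in>I. f k \<theta>)) has_derivative (\<lambda>h. (a *\<^sub>R (\<Sum>k\<in>I. G k)) \<bullet> h)) (at x)"
    using has_derivative_mult_right[OF has_derivative_sum[OF d, of I]]
    by (simp add: inner_sum_left sum_distrib_left)
  from gradient_zero_at_min[OF this x] min have "a *\<^sub>R (\<Sum>k\<in>I. G k) = 0" by blast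
  then show ?thesis using a by simp
qed

text \<open>The classical argument: the second difference
  \<open>\<Delta>(t) = f(x+th+tk) - f(x+th) - f(x+tk) + f(x)\<close> is symmetric in \<open>h, k\<close> and equals
  \<open>t\<^sup>2 (H k) \<bullet> h + o(t\<^sup>2)\<close> when \<open>H\<close> is the derivative at \<open>x\<close> of the gradient \<open>G\<close> of \<open>f\<close>.
  No continuity of \<open>H\<close> is needed.\<close>
lemma second_difference_mvt:
  fixes f :: "real^'n \<Rightarrow> real" and G :: "real^'n \<Rightarrow> real^'n"
  assumes fd: "\<And>z. z \<in> U \<Longrightarrow> (f has_derivative (\<lambda>v. G z \<bullet> v)) (at z)"
    and inU: "\<And>s. 0 \<le> s \<Longrightarrow> s \<le> t \<Longrightarrow> x + s *\<^sub>R h + t *\<^sub>R k \<in> U \<and> x + s *\<^sub>R h \<in> U"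
    and t: "t > 0"
  shows "\<exists>z. 0 < z \<and> z < t \<and>
    f (x + t *\<^sub>R h + t *\<^sub>R k) - f (x + t *\<^sub>R h) - f (x + t *\<^sub>R k) + f x
      = t * ((G (x + z *\<^sub>R h + t *\<^sub>R k) - G (x + z *\<^sub>R h)) \<bullet> h)"
proof -
  define g where "g s = f (x + s *\<^sub>R h + t *\<^sub>R k) - f (x + s *\<^sub>R h)" for s
  define g' where "g' s = (G (x + s *\<^sub>R h + t *\<^sub>R k) - G (x + s *\<^sub>R h)) \<bullet> h" for s
  have "DERIV g s :> g' s" if s: "0 \<le> s" "s \<le> t" for s
  proof -
    have "((\<lambda>s. f (x + s *\<^sub>R h + t *\<^sub>R k)) has_derivative (\<lambda>r. G (x + s *\<^sub>R h + t *\<^sub>R k) \<bullet> (r *\<^sub>R h))) (at s)"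
      by (rule has_derivative_compose[of "\<lambda>s. x + s *\<^sub>R h + t *\<^sub>R k", OF _ fd])
         (auto intro!: derivative_eq_intros simp: inU s)
    moreover have "((\<lambda>s. f (x + s *\<^sub>R h)) has_derivative (\<lambda>r. G (x + s *\<^sub>R h) \<bullet> (r *\<^sub>R h))) (at s)"
      by (rule has_derivative_compose[of "\<lambda>s. x + s *\<^sub>R h", OF _ fd])
         (auto intro!: derivative_eq_intros simp: inU s)
    ultimately have "(g has_derivative (\<lambda>r. G (x + s *\<^sub>R h + t *\<^sub>R k) \<bullet> (r *\<^sub>R h) - G (x + s *\<^sub>R h) \<bullet> (r *\<^sub>R h))) (at s)"
      unfolding g_def by (rule has_derivative_diff)
    moreover have "(\<lambda>r. G (x + s *\<^sub>R h + t *\<^sub>R k) \<bullet> (r *\<^sub>R h) - G (x + s *\<^sub>R h) \<bullet> (r *\<^sub>R h)) = (*) (g' s)"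
      unfolding g'_def by (rule ext) (simp add: inner_diff_left algebra_simps)
    ultimately show ?thesis unfolding has_field_derivative_def by simp
  qed
  then obtain z where "0 < z" "z < t" "g t - g 0 = (t - 0) * g' z"
    using MVT2[of 0 t g g'] t by auto
  then show ?thesis unfolding g_def g'_def by (intro exI[of _ z]) (simp add: algebra_simps)
qed

lemma gradient_increment_estimate:
  fixes G :: "real^'n \<Rightarrow> real^'n" and H :: "real^'n^'n"
  assumes a: "norm (G (x + z *\<^sub>R h + t *\<^sub>R k) - G x - H *v (z *\<^sub>R h + t *\<^sub>R k)) \<le> \<epsilon> * norm (z *\<^sub>R h + t *\<^sub>R k)"
    and b: "norm (G (x + z *\<^sub>R h) - G x - H *v (z *\<^sub>R h)) \<le> \<epsilon> * norm (z *\<^sub>R h)"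
    and z: "0 \<le> z" "z \<le> t" and eps: "\<epsilon> \<ge> 0"
  shows "\<bar>(G (x + z *\<^sub>R h + t *\<^sub>R k) - G (x + z *\<^sub>R h)) \<bullet> h - t * ((H *v k) \<bullet> h)\<bar>
           \<le> \<epsilon> * t * ((2 * norm h + norm k) * norm h)"
proof -
  define u where "u = G (x + z *\<^sub>R h + t *\<^sub>R k) - G x - H *v (z *\<^sub>R h + t *\<^sub>R k)"
  define v where "v = G (x + z *\<^sub>R h) - G x - H *v (z *\<^sub>R h)"
  have "(G (x + z *\<^sub>R h + t *\<^sub>R k) - G (x + z *\<^sub>R h)) \<bullet> h - t * ((H *v k) \<bullet> h) = (u - v) \<bullet> h"
    unfolding u_def v_def
    by (simp add: matrix_vector_right_distrib matrix_vector_mult_scaleR inner_diff_left algebra_simps)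
  also have "\<bar>(u - v) \<bullet> h\<bar> \<le> (norm u + norm v) * norm h"
    by (rule order_trans[OF Cauchy_Schwarz_ineq2 mult_right_mono[OF norm_triangle_ineq4]]) simp
  also have "\<dots> \<le> (\<epsilon> * (t * norm h + t * norm k) + \<epsilon> * (t * norm h)) * norm h"
  proof -
    have "norm (z *\<^sub>R h + t *\<^sub>R k) \<le> t * norm h + t * norm k"
      using norm_triangle_ineq[of "z *\<^sub>R h" "t *\<^sub>R k"] mult_right_mono[OF z(2), of "norm h"] z
      by simp
    moreover have "norm (z *\<^sub>R h) \<le> t * norm h" using z by (simp add: mult_right_mono)
    ultimately show ?thesis using a b eps unfolding u_def v_def
      by (intro mult_right_mono add_mono) (auto intro: order_trans mult_left_mono)
  qed
  also have "\<dots> = \<epsilon> * t * ((2 * norm h + norm k) * norm h)" by (simp add: algebra_simps)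
  finally show ?thesis .
qed

lemma second_difference_estimate:
  fixes f :: "real^'n \<Rightarrow> real" and G :: "real^'n \<Rightarrow> real^'n" and H :: "real^'n^'n"
  assumes U: "open U" "x \<in> U" and fd: "\<And>z. z \<in> U \<Longrightarrow> (f has_derivative (\<lambda>v. G z \<bullet> v)) (at z)"
    and Gd: "(G has_derivative (\<lambda>v. H *v v)) (at x)" and eps: "\<epsilon> > 0"
  shows "\<exists>\<delta>>0. \<forall>t. 0 < t \<and> t < \<delta> \<longrightarrow>
     \<bar>f (x + t *\<^sub>R h + t *\<^sub>R k) - f (x + t *\<^sub>R h) - f (x + t *\<^sub>R k) + f x - t\<^sup>2 * ((H *v k) \<bullet> h)\<bar>
        \<le> \<epsilon> * t\<^sup>2 * ((2 * norm h + norm k) * norm h)"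
proof -
  obtain \<rho> where \<rho>: "\<rho> > 0" "ball x \<rho> \<subseteq> U" using U open_contains_ball by blast
  obtain d where d: "d > 0" "\<forall>y. norm (y - x) < d \<longrightarrow> norm (G y - G x - H *v (y - x)) \<le> \<epsilon> * norm (y - x)"
    using Gd eps unfolding has_derivative_at_alt by blast
  define \<delta> where "\<delta> = min \<rho> d / (norm h + norm k + 1)"
  have \<delta>: "\<delta> > 0" unfolding \<delta>_def using \<rho> d by (simp add: add_nonneg_pos)
  show ?thesis
  proof (intro exI[of _ \<delta>] conjI allI impI \<delta>)
    fix t :: real assume t: "0 < t \<and> t < \<delta>"
    have "t * (norm h + norm k + 1) < min \<rho> d"
      using t \<delta>_def by (smt (verit) divide_pos_pos mult_strict_right_mono nonzero_eq_divide_eq norm_ge_zero)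
    then have small: "norm (s *\<^sub>R h + t *\<^sub>R k) < min \<rho> d \<and> norm (s *\<^sub>R h) < min \<rho> d"
      if "0 \<le> s" "s \<le> t" for s
    proof -
      have "norm (s *\<^sub>R h) \<le> t * norm h" using that mult_right_mono[of s t "norm h"] by simp
      moreover have "norm (s *\<^sub>R h + t *\<^sub>R k) \<le> norm (s *\<^sub>R h) + t * norm k"
        using norm_triangle_ineq[of "s *\<^sub>R h" "t *\<^sub>R k"] t by simp
      moreover have "0 \<le> t * norm k" "0 \<le> t * norm h" "0 < t" using t by simp_all
      moreover have "t * norm h + t * norm k + t < \<rho>" "t * norm h + t * norm k + t < d"
        using \<open>t * (norm h + norm k + 1) < min \<rho> d\<close> by (simp_all add: distrib_left)
      ultimately show ?thesis unfolding min_less_iff_conj by (intro conjI; linarith)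
    qed
    have near: "x + v \<in> U" if "norm v < \<rho>" for v
      using \<rho>(2) that by (metis add_diff_cancel_left' dist_norm mem_ball norm_minus_commute subsetD)
    have inU: "x + s *\<^sub>R h + t *\<^sub>R k \<in> U \<and> x + s *\<^sub>R h \<in> U" if "0 \<le> s" "s \<le> t" for s
      using small[OF that] near[of "s *\<^sub>R h + t *\<^sub>R k"] near[of "s *\<^sub>R h"] by (simp add: add.assoc)
    obtain z where z: "0 < z" "z < t" and \<Delta>:
      "f (x + t *\<^sub>R h + t *\<^sub>R k) - f (x + t *\<^sub>R h) - f (x + t *\<^sub>R k) + f x
         = t * ((G (x + z *\<^sub>R h + t *\<^sub>R k) - G (x + z *\<^sub>R h)) \<bullet> h)"
      using second_difference_mvt[OF fd inU] t by blast
    have "\<bar>(G (x + z *\<^sub>R h + t *\<^sub>R k) - G (x + z *\<^sub>R h)) \<bullet> h - t * ((H *v k) \<bullet> h)\<bar>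
           \<le> \<epsilon> * t * ((2 * norm h + norm k) * norm h)"
      using z eps small[of z] d(2)[rule_format, of "x + z *\<^sub>R h + t *\<^sub>R k"] d(2)[rule_format, of "x + z *\<^sub>R h"]
      by (intro gradient_increment_estimate) (auto simp: add.assoc)
    then have "t * \<bar>(G (x + z *\<^sub>R h + t *\<^sub>R k) - G (x + z *\<^sub>R h)) \<bullet> h - t * ((H *v k) \<bullet> h)\<bar>
           \<le> \<epsilon> * t\<^sup>2 * ((2 * norm h + norm k) * norm h)"
      using t mult_left_mono by (fastforce simp: power2_eq_square mult_ac)
    moreover have "f (x + t *\<^sub>R h + t *\<^sub>R k) - f (x + t *\<^sub>R h) - f (x + t *\<^sub>R k) + f x - t\<^sup>2 * ((H *v k) \<bullet> h)
        = t * ((G (x + z *\<^sub>R h + t *\<^sub>R k) - G (x + z *\<^sub>R h)) \<bullet> h - t * ((H *v k) \<bullet> h))"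
      unfolding \<Delta> by (simp add: power2_eq_square algebra_simps)
    ultimately show "\<bar>f (x + t *\<^sub>R h + t *\<^sub>R k) - f (x + t *\<^sub>R h) - f (x + t *\<^sub>R k) + f x - t\<^sup>2 * ((H *v k) \<bullet> h)\<bar>
        \<le> \<epsilon> * t\<^sup>2 * ((2 * norm h + norm k) * norm h)"
      using t by (simp add: abs_mult)
  qed
qed

lemma eq_if_close_for_all_eps:
  fixes a b C :: real
  assumes "\<And>\<epsilon>. \<epsilon> > 0 \<Longrightarrow> \<bar>a - b\<bar> \<le> \<epsilon> * C" "C \<ge> 0"
  shows "a = b"
proof (rule ccontr)
  assume "a \<noteq> b"
  then have p: "\<bar>a - b\<bar> > 0" by simp
  have "\<bar>a - b\<bar> \<le> (\<bar>a - b\<bar> / (C + 1)) * C" using assms(1)[of "\<bar>a - b\<bar> / (C + 1)"] p assms(2) by simp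
  also have "\<dots> < \<bar>a - b\<bar>" using p assms(2) by (simp add: field_simps)
  finally show False by simp
qed

lemma hessian_symmetric:
  fixes f :: "real^'n \<Rightarrow> real" and G :: "real^'n \<Rightarrow> real^'n" and H :: "real^'n^'n"
  assumes U: "open U" "x \<in> U" and fd: "\<And>z. z \<in> U \<Longrightarrow> (f has_derivative (\<lambda>v. G z \<bullet> v)) (at z)"
    and Gd: "(G has_derivative (\<lambda>v. H *v v)) (at x)"
  shows "transpose H = H"
proof -
  have "(H *v k) \<bullet> h = (H *v h) \<bullet> k" for h k
  proof (rule eq_if_close_for_all_eps)
    fix \<epsilon> :: real assume eps: "\<epsilon> > 0"
    define \<Delta> where "\<Delta> t = f (x + t *\<^sub>R h + t *\<^sub>R k) - f (x + t *\<^sub>R h) - f (x + t *\<^sub>R k) + f x" for t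
    have \<Delta>_swap: "\<Delta> t = f (x + t *\<^sub>R k + t *\<^sub>R h) - f (x + t *\<^sub>R k) - f (x + t *\<^sub>R h) + f x" for t
      unfolding \<Delta>_def by (simp add: algebra_simps)
    obtain d1 where d1: "d1 > 0" "\<forall>t. 0 < t \<and> t < d1 \<longrightarrow>
        \<bar>\<Delta> t - t\<^sup>2 * ((H *v k) \<bullet> h)\<bar> \<le> \<epsilon> * t\<^sup>2 * ((2 * norm h + norm k) * norm h)"
      using second_difference_estimate[OF U fd Gd eps, of h k] unfolding \<Delta>_def by blast
    obtain d2 where d2: "d2 > 0" "\<forall>t. 0 < t \<and> t < d2 \<longrightarrow>
        \<bar>\<Delta> t - t\<^sup>2 * ((H *v h) \<bullet> k)\<bar> \<le> \<epsilon> * t\<^sup>2 * ((2 * norm k + norm h) * norm k)"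
      using second_difference_estimate[OF U fd Gd eps, of k h] unfolding \<Delta>_swap by blast
    define t where "t = min d1 d2 / 2"
    have t: "0 < t" "t < d1" "t < d2" unfolding t_def using d1 d2 by auto
    have "\<bar>t\<^sup>2 * ((H *v k) \<bullet> h - (H *v h) \<bullet> k)\<bar>
        = \<bar>(\<Delta> t - t\<^sup>2 * ((H *v h) \<bullet> k)) - (\<Delta> t - t\<^sup>2 * ((H *v k) \<bullet> h))\<bar>"
      by (simp add: algebra_simps)
    also have "\<dots> \<le> \<bar>\<Delta> t - t\<^sup>2 * ((H *v k) \<bullet> h)\<bar> + \<bar>\<Delta> t - t\<^sup>2 * ((H *v h) \<bullet> k)\<bar>"
      by (rule order_trans[OF abs_triangle_ineq4]) simp
    also have "\<dots> \<le> \<epsilon> * t\<^sup>2 * ((2 * norm h + norm k) * norm h) + \<epsilon> * t\<^sup>2 * ((2 * norm k + norm h) * norm k)"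
      using d1(2) d2(2) t by (intro add_mono) auto
    also have "\<dots> = t\<^sup>2 * (\<epsilon> * ((2 * norm h + norm k) * norm h + (2 * norm k + norm h) * norm k))"
      by (simp add: algebra_simps)
    finally show "\<bar>(H *v k) \<bullet> h - (H *v h) \<bullet> k\<bar>
        \<le> \<epsilon> * ((2 * norm h + norm k) * norm h + (2 * norm k + norm h) * norm k)"
      using t by (simp add: abs_mult)
  qed simp
  have entry: "(H *v axis j 1) \<bullet> axis i 1 = H $ i $ j" for i j
    by (simp add: inner_axis matrix_vector_mult_basis column_def)
  have "H $ i $ j = H $ j $ i" for i j
    using \<open>\<And>h k. (H *v k) \<bullet> h = (H *v h) \<bullet> k\<close>[of "axis i 1" "axis j 1"] by (simp add: entry)
  then show ?thesis by (simp add: transpose_def vec_eq_iff)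
qed

locale iid_sample = prob_space M
  for M :: "'a measure" and S :: "'y measure" and D :: "'y measure" and Y :: "nat \<Rightarrow> 'a \<Rightarrow> 'y" +
  assumes indep: "indep_vars (\<lambda>_. S) Y UNIV"
    and ident: "\<And>i. distr M S (Y i) = D"
begin

lemma Y_measurable [measurable]: "Y i \<in> measurable M S"
  using indep unfolding indep_vars_def2 by auto

lemma Y_in_space: "\<omega> \<in> space M \<Longrightarrow> Y i \<omega> \<in> space S"
  using measurable_space[OF Y_measurable] by blast

lemma sets_D: "sets D = sets S" and space_D: "space D = space S"
  using ident[of 0, symmetric] by simp_all

lemma prob_space_D: "prob_space D"
  using ident[of 0] prob_space_distr[OF Y_measurable[of 0]] by simp

lemma borel_measurable_D: "borel_measurable D = borel_measurable S"
  using measurable_cong_sets[OF sets_D refl] .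

lemma measurable_D_S: "f \<in> borel_measurable D \<Longrightarrow> f \<in> borel_measurable S"
  by (simp add: borel_measurable_D)

lemma integrable_Y: "integrable D f \<Longrightarrow> integrable M (\<lambda>\<omega>. f (Y i \<omega>) :: real)"
  using integrable_distr_eq[OF Y_measurable measurable_D_S] ident by auto

lemma integral_Y:
  assumes "integrable D f" shows "(\<integral>\<omega>. f (Y i \<omega>) \<partial>M) = (integral\<^sup>L D f :: real)"
  using integral_distr[OF Y_measurable[of i] measurable_D_S[OF borel_measurable_integrable[OF assms]]]
  by (simp add: ident)

lemma prob_Y_ge:
  assumes "f \<in> borel_measurable S"
  shows "prob {\<omega>\<in>space M. f (Y i \<omega>) \<ge> (t::real)} = measure D {y\<in>space D. f y \<ge> t}"
proof -
  have A: "{y\<in>space S. f y \<ge> t} \<in> sets S" using assms by measurable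
  have "measure D {y\<in>space D. f y \<ge> t} = prob (Y i -` {y\<in>space S. f y \<ge> t} \<inter> space M)"
    unfolding space_D using measure_distr[OF Y_measurable A] ident by simp
  also have "Y i -` {y\<in>space S. f y \<ge> t} \<inter> space M = {\<omega>\<in>space M. f (Y i \<omega>) \<ge> t}"
    using Y_in_space by auto
  finally show ?thesis by simp
qed

definition sample_mean :: "('y \<Rightarrow> real) \<Rightarrow> nat \<Rightarrow> 'a \<Rightarrow> real" where
  "sample_mean f n \<omega> = (1 / real n) * (\<Sum>i<n. f (Y i \<omega>))"

lemma integrable_sample_mean: "integrable D f \<Longrightarrow> integrable M (sample_mean f n)"
  unfolding sample_mean_def using integrable_Y by auto

lemma expectation_sample_mean:
  "integrable D f \<Longrightarrow> n \<ge> 1 \<Longrightarrow> expectation (sample_mean f n) = integral\<^sup>L D f"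
  unfolding sample_mean_def using integrable_Y integral_Y by (simp add: integral_sum)

lemma sample_mean_Markov:
  assumes f: "integrable D f" and fpos: "\<And>y. y \<in> space S \<Longrightarrow> f y \<ge> 0" and c: "c > 0" and n: "n \<ge> 1"
  shows "prob {\<omega>\<in>space M. sample_mean f n \<omega> \<ge> c} \<le> integral\<^sup>L D f / c"
proof -
  have "AE \<omega> in M. 0 \<le> sample_mean f n \<omega>" unfolding sample_mean_def
    using fpos Y_in_space by (intro AE_I2 mult_nonneg_nonneg sum_nonneg) auto
  from integral_Markov_inequality_measure[OF integrable_sample_mean[OF f] sets.top this c]
  show ?thesis using expectation_sample_mean[OF f n] by simp
qed

lemma whp_sample_mean_le:
  assumes f: "integrable D f" and fpos: "\<And>y. y \<in> space S \<Longrightarrow> f y \<ge> 0"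
    and c: "c > 0" and small: "integral\<^sup>L D f \<le> c * e"
  shows "whp M e (\<lambda>n \<omega>. sample_mean f n \<omega> \<le> c)"
  unfolding whp_def
proof (intro exI[of _ 1] allI impI)
  fix n :: nat assume n: "n \<ge> 1"
  define B where "B = {\<omega>\<in>space M. sample_mean f n \<omega> \<ge> c}"
  have B: "B \<in> sets M" unfolding B_def using integrable_sample_mean[OF f] by measurable
  have "integral\<^sup>L D f / c \<le> e" using small c by (simp add: divide_le_eq mult.commute)
  then have "prob B \<le> e" unfolding B_def using sample_mean_Markov[OF f fpos c n] by linarith
  then have "prob (space M - B) \<ge> 1 - e" using prob_compl[OF B] by linarith
  moreover have "\<forall>\<omega>\<in>space M - B. sample_mean f n \<omega> \<le> c" unfolding B_def by auto
  ultimately show "\<exists>A\<in>sets M. prob A \<ge> 1 - e \<and> (\<forall>\<omega>\<in>A. sample_mean f n \<omega> \<le> c)"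
    using B by blast
qed

lemma sample_mean_bounded:
  assumes f: "integrable D f" and fpos: "\<And>y. y \<in> space S \<Longrightarrow> f y \<ge> 0" and e: "e > 0"
  shows "\<exists>K. whp M e (\<lambda>n \<omega>. sample_mean f n \<omega> \<le> K)"
proof -
  have "integral\<^sup>L D f \<ge> 0" using fpos space_D by (intro integral_nonneg_AE) auto
  then have "whp M e (\<lambda>n \<omega>. sample_mean f n \<omega> \<le> (integral\<^sup>L D f + 1) / e)"
    using e by (intro whp_sample_mean_le[OF f fpos]) auto
  then show ?thesis by blast
qed

end

section \<open>Laws of large numbers for i.i.d.\ samples\<close>

lemma tail_integral_tendsto_zero:
  assumes f: "integrable D (f :: _ \<Rightarrow> real)" and c: "c > 0"
  shows "(\<lambda>n. \<integral>y. \<bar>f y\<bar> * indicator {y\<in>space D. \<bar>f y\<bar> \<ge> c * real n} y \<partial>D) \<longlonglongrightarrow> 0"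
proof -
  have fm[measurable]: "f \<in> borel_measurable D" using f by auto
  have "(\<lambda>n. \<integral>y. \<bar>f y\<bar> * indicator {y\<in>space D. \<bar>f y\<bar> \<ge> c * real n} y \<partial>D) \<longlonglongrightarrow> integral\<^sup>L D (\<lambda>y. 0)"
  proof (rule integral_dominated_convergence[where w="\<lambda>y. \<bar>f y\<bar>"])
    show "integrable D (\<lambda>y. \<bar>f y\<bar>)" using f by auto
    show "AE y in D. (\<lambda>n. \<bar>f y\<bar> * indicator {y\<in>space D. \<bar>f y\<bar> \<ge> c * real n} y) \<longlonglongrightarrow> 0"
    proof (rule AE_I2)
      fix y
      have "eventually (\<lambda>n. \<bar>f y\<bar> < c * real n) sequentially"
        using c by real_asymp
      then have "eventually (\<lambda>n. \<bar>f y\<bar> * indicator {y\<in>space D. \<bar>f y\<bar> \<ge> c * real n} y = 0) sequentially"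
        by eventually_elim (auto simp: indicator_def)
      then show "(\<lambda>n. \<bar>f y\<bar> * indicator {y\<in>space D. \<bar>f y\<bar> \<ge> c * real n} y) \<longlonglongrightarrow> 0"
        by (rule tendsto_eventually)
    qed
  qed (auto simp: indicator_def)
  then show ?thesis by simp
qed

lemma measure_ge_le_tail_integral:
  assumes D: "finite_measure D" and f: "integrable D (f :: _ \<Rightarrow> real)" and t: "t > 0"
  shows "measure D {y\<in>space D. f y \<ge> t} \<le> (\<integral>y. \<bar>f y\<bar> * indicator {y\<in>space D. \<bar>f y\<bar> \<ge> t} y \<partial>D) / t"
proof -
  have fm[measurable]: "f \<in> borel_measurable D" using f by auto
  define u where "u y = \<bar>f y\<bar> * indicator {y\<in>space D. \<bar>f y\<bar> \<ge> t} y" for y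
  have ui: "integrable D u" unfolding u_def
    by (rule Bochner_Integration.integrable_bound[where f="\<lambda>y. \<bar>f y\<bar>"]) (use f in \<open>auto simp: indicator_def\<close>)
  have "measure D {y\<in>space D. f y \<ge> t} \<le> measure D {y\<in>space D. u y \<ge> t}"
    using D by (intro finite_measure.finite_measure_mono) (auto simp: u_def indicator_def)
  also have "\<dots> \<le> integral\<^sup>L D u / t"
    by (rule integral_Markov_inequality_measure[OF ui sets.top _ t]) (auto simp: u_def)
  finally show ?thesis unfolding u_def .
qed

context iid_sample
begin

lemma whp_max_small:
  assumes f: "integrable D f" and eta: "\<eta> > 0" and e: "e > 0"
  shows "whp M e (\<lambda>n \<omega>. \<forall>i<n. f (Y i \<omega>) \<le> \<eta> * real n)"
proof -
  interpret D: prob_space D by (rule prob_space_D)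
  have fm: "f \<in> borel_measurable S" using measurable_D_S f by blast
  define T where "T n = (\<integral>y. \<bar>f y\<bar> * indicator {y\<in>space D. \<bar>f y\<bar> \<ge> \<eta> * real n} y \<partial>D)" for n
  have "eventually (\<lambda>n. T n < \<eta> * e) sequentially"
    using tail_integral_tendsto_zero[OF f eta] eta e unfolding T_def by (intro order_tendstoD) auto
  then obtain N where N: "\<And>n. n \<ge> N \<Longrightarrow> T n < \<eta> * e" unfolding eventually_sequentially by blast
  show ?thesis unfolding whp_def
  proof (intro exI[of _ "max N 1"] allI impI)
    fix n assume n: "max N 1 \<le> n"
    define B where "B = (\<Union>i<n. {\<omega>\<in>space M. f (Y i \<omega>) \<ge> \<eta> * real n})"
    have Bi: "\<And>i. {\<omega>\<in>space M. f (Y i \<omega>) \<ge> \<eta> * real n} \<in> sets M" using fm by measurable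
    have B: "B \<in> sets M" unfolding B_def using Bi by auto
    have "prob B \<le> (\<Sum>i<n. prob {\<omega>\<in>space M. f (Y i \<omega>) \<ge> \<eta> * real n})"
      unfolding B_def by (rule measure_UNION_le) (auto intro: Bi)
    also have "\<dots> = real n * measure D {y\<in>space D. f y \<ge> \<eta> * real n}"
      using prob_Y_ge[OF fm] by simp
    also have "\<dots> \<le> real n * (T n / (\<eta> * real n))"
      unfolding T_def using n eta
      by (intro mult_left_mono measure_ge_le_tail_integral[OF D.finite_measure_axioms f]) auto
    also have "\<dots> = T n / \<eta>" using n eta by (simp add: field_simps)
    also have "\<dots> \<le> e" using N[of n] n eta by (simp add: divide_le_eq mult.commute)
    finally have "prob (space M - B) \<ge> 1 - e" using prob_compl[OF B] by linarith
    moreover have "\<forall>\<omega>\<in>space M - B. \<forall>i<n. f (Y i \<omega>) \<le> \<eta> * real n" unfolding B_def by auto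
    ultimately show "\<exists>A\<in>sets M. prob A \<ge> 1 - e \<and> (\<forall>\<omega>\<in>A. \<forall>i<n. f (Y i \<omega>) \<le> \<eta> * real n)"
      using B by blast
  qed
qed

lemma whp_lln_bounded:
  assumes hm: "h \<in> borel_measurable S" and hb: "\<And>y. \<bar>h y\<bar> \<le> K" and K: "K > 0"
    and eta: "\<eta> > 0" and e: "e > 0"
  shows "whp M e (\<lambda>n \<omega>. \<bar>sample_mean h n \<omega> - integral\<^sup>L D h\<bar> \<le> \<eta>)"
proof -
  have hD: "h \<in> borel_measurable D" using hm by (simp add: borel_measurable_D)
  have hi: "integrable D h"
    using prob_space_D hb by (intro finite_measure.integrable_const_bound[OF prob_space.finite_measure]
        AE_I2) (auto simp: hD)
  define c where "c = \<eta>\<^sup>2 / (2 * K\<^sup>2)"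
  have "(\<lambda>n. 2 * exp (- c * real n)) \<longlonglongrightarrow> 0" using eta K unfolding c_def by real_asymp
  then have "eventually (\<lambda>n. 2 * exp (- c * real n) < e) sequentially" using e by (rule order_tendstoD)
  then obtain N where N: "\<And>n. n \<ge> N \<Longrightarrow> 2 * exp (- c * real n) < e" unfolding eventually_sequentially by blast
  show ?thesis unfolding whp_def
  proof (intro exI[of _ "max N 1"] allI impI)
    fix n assume n: "max N 1 \<le> n"
    interpret H: Hoeffding_ineq M "{..<n}" "\<lambda>i \<omega>. h (Y i \<omega>)" "\<lambda>_. -K" "\<lambda>_. K" "real n * integral\<^sup>L D h"
    proof unfold_locales
      show "indep_vars (\<lambda>_. borel) (\<lambda>i \<omega>. h (Y i \<omega>)) {..<n}"
        by (rule indep_vars_subset[OF indep_vars_compose2[OF indep]]) (auto simp: hm)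
      show "\<And>i. AE x in M. h (Y i x) \<in> {- K..K}" using hb by (intro AE_I2) (metis abs_le_D1 abs_le_D2 atLeastAtMost_iff minus_le_iff)
      show "real n * integral\<^sup>L D h \<equiv> \<Sum>i\<in>{..<n}. expectation (\<lambda>\<omega>. h (Y i \<omega>))"
        using integral_Y[OF hi] by simp
    qed simp
    define B where "B = {\<omega>\<in>space M. \<bar>(\<Sum>i\<in>{..<n}. h (Y i \<omega>)) - real n * integral\<^sup>L D h\<bar> \<ge> real n * \<eta>}"
    have B: "B \<in> sets M" unfolding B_def using hm by measurable
    have "prob B \<le> 2 * exp (-2 * (real n * \<eta>)\<^sup>2 / (\<Sum>i\<in>{..<n}. (K - (-K))\<^sup>2))"
      unfolding B_def using n eta K by (intro H.Hoeffding_ineq_abs_ge) auto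
    also have "-2 * (real n * \<eta>)\<^sup>2 / (\<Sum>i\<in>{..<n}. (K - (-K))\<^sup>2) = - c * real n"
      unfolding c_def using n K by (simp add: field_simps power2_eq_square)
    finally have "prob (space M - B) \<ge> 1 - e" using N[of n] n prob_compl[OF B] by simp
    moreover have "\<bar>sample_mean h n \<omega> - integral\<^sup>L D h\<bar> \<le> \<eta>" if "\<omega> \<in> space M - B" for \<omega>
    proof -
      have "\<bar>(\<Sum>i<n. h (Y i \<omega>)) - real n * integral\<^sup>L D h\<bar> \<le> real n * \<eta>" using that unfolding B_def by auto
      then show ?thesis using n unfolding sample_mean_def
        by (simp add: abs_le_iff field_simps)
    qed
    ultimately show "\<exists>A\<in>sets M. prob A \<ge> 1 - e \<and> (\<forall>\<omega>\<in>A. \<bar>sample_mean h n \<omega> - integral\<^sup>L D h\<bar> \<le> \<eta>)"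
      using B by blast
  qed
qed

text \<open>Weak law of large numbers for integrable observations: truncate at a level \<open>K\<close>, apply
  Hoeffding to the bounded part and Markov's inequality to the (small) tail part.\<close>
lemma whp_lln:
  assumes h: "integrable D h" and eta: "\<eta> > 0" and e: "e > 0"
  shows "whp M e (\<lambda>n \<omega>. \<bar>sample_mean h n \<omega> - integral\<^sup>L D h\<bar> \<le> \<eta>)"
proof -
  have hm[measurable]: "h \<in> borel_measurable S" using measurable_D_S h by blast
  define \<tau> where "\<tau> = (\<eta> / 3) * min (e / 2) 1"
  have \<tau>: "\<tau> > 0" "\<tau> \<le> (\<eta> / 3) * (e / 2)" "\<tau> \<le> \<eta> / 3" unfolding \<tau>_def using eta e by auto
  have "eventually (\<lambda>n. (\<integral>y. \<bar>h y\<bar> * indicator {y\<in>space D. \<bar>h y\<bar> \<ge> 1 * real n} y \<partial>D) < \<tau>) sequentially"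
    using tail_integral_tendsto_zero[OF h, of 1] \<tau> by (intro order_tendstoD) auto
  then obtain N where
    "\<forall>n\<ge>N. (\<integral>y. \<bar>h y\<bar> * indicator {y\<in>space D. \<bar>h y\<bar> \<ge> 1 * real n} y \<partial>D) < \<tau>"
    unfolding eventually_sequentially by blast
  then have N: "(\<integral>y. \<bar>h y\<bar> * indicator {y\<in>space D. \<bar>h y\<bar> \<ge> real (max N 1)} y \<partial>D) < \<tau>"
    by (simp add: max.cobounded1 del: of_nat_max)
  define K where "K = real (max N 1)"
  have K: "K \<ge> 1" unfolding K_def by simp
  define t where "t y = \<bar>h y\<bar> * indicator {y\<in>space S. \<bar>h y\<bar> \<ge> K} y" for y
  define hK where "hK y = max (-K) (min K (h y))" for y
  have [measurable]: "t \<in> borel_measurable S" "hK \<in> borel_measurable S"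
    unfolding t_def hK_def by measurable
  have tD: "t \<in> borel_measurable D" "hK \<in> borel_measurable D"
    unfolding borel_measurable_D by simp_all
  have ti: "integrable D t"
    by (rule Bochner_Integration.integrable_bound[where f="\<lambda>y. \<bar>h y\<bar>"])
       (use h tD in \<open>auto simp: t_def indicator_def\<close>)
  have hKi: "integrable D hK"
    by (rule Bochner_Integration.integrable_bound[where f="\<lambda>y. \<bar>h y\<bar>"])
       (use h tD K in \<open>auto simp: hK_def intro!: AE_I2\<close>)
  have tail: "integral\<^sup>L D t < \<tau>" using N unfolding t_def K_def space_D .
  have diff: "\<bar>h y - hK y\<bar> \<le> t y" if "y \<in> space S" for y
    using K that unfolding hK_def t_def indicator_def by (auto simp: abs_if max_def min_def)
  have mean_diff: "\<bar>integral\<^sup>L D h - integral\<^sup>L D hK\<bar> \<le> integral\<^sup>L D t"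
  proof -
    have "\<bar>integral\<^sup>L D h - integral\<^sup>L D hK\<bar> \<le> (\<integral>y. \<bar>h y - hK y\<bar> \<partial>D)"
      using h hKi integral_abs_bound[of D "\<lambda>y. h y - hK y"] by simp
    also have "\<dots> \<le> integral\<^sup>L D t" using h hKi ti diff space_D by (intro integral_mono) auto
    finally show ?thesis .
  qed
  have "whp M (e / 2 + e / 2) (\<lambda>n \<omega>. \<bar>sample_mean hK n \<omega> - integral\<^sup>L D hK\<bar> \<le> \<eta> / 3
                                    \<and> sample_mean t n \<omega> \<le> \<eta> / 3)"
  proof (intro whp_conj)
    show "whp M (e / 2) (\<lambda>n \<omega>. \<bar>sample_mean hK n \<omega> - integral\<^sup>L D hK\<bar> \<le> \<eta> / 3)"
      using K eta e by (intro whp_lln_bounded[of _ K]) (auto simp: hK_def)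
    show "whp M (e / 2) (\<lambda>n \<omega>. sample_mean t n \<omega> \<le> \<eta> / 3)"
      using ti tail \<tau> eta by (intro whp_sample_mean_le) (auto simp: t_def)
  qed
  then show ?thesis
  proof (rule whp_mono[where ?N0.0 = 1])
    fix n \<omega> assume n: "n \<ge> 1" and \<omega>: "\<omega> \<in> space M"
      and ev: "\<bar>sample_mean hK n \<omega> - integral\<^sup>L D hK\<bar> \<le> \<eta> / 3 \<and> sample_mean t n \<omega> \<le> \<eta> / 3"
    have "\<bar>sample_mean h n \<omega> - sample_mean hK n \<omega>\<bar> \<le> sample_mean t n \<omega>"
    proof -
      have "\<bar>(\<Sum>i<n. h (Y i \<omega>)) - (\<Sum>i<n. hK (Y i \<omega>))\<bar> \<le> (\<Sum>i<n. t (Y i \<omega>))"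
        unfolding sum_subtractf[symmetric]
        by (rule order_trans[OF sum_abs sum_mono]) (use diff Y_in_space \<omega> in auto)
      then show ?thesis using n unfolding sample_mean_def
        by (simp add: abs_mult flip: right_diff_distrib) (simp add: field_simps)
    qed
    then show "\<bar>sample_mean h n \<omega> - integral\<^sup>L D h\<bar> \<le> \<eta>"
      using ev mean_diff tail \<tau> by linarith
  qed simp
qed

lemma whp_matrix_lln:
  fixes H :: "'y \<Rightarrow> real^'p^'q"
  assumes int: "\<And>i j. integrable D (\<lambda>y. H y $ i $ j)" and eta: "\<eta> > 0" and e: "e > 0"
  shows "whp M e (\<lambda>n \<omega>. entry_norm ((1 / real n) *\<^sub>R (\<Sum>k<n. H (Y k \<omega>))
                              - (\<chi> i j. integral\<^sup>L D (\<lambda>y. H y $ i $ j))) \<le> \<eta>)"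
proof -
  define \<eta>' where "\<eta>' = \<eta> / (real CARD('q) * real CARD('p))"
  have \<eta>': "\<eta>' > 0" unfolding \<eta>'_def using eta by simp
  have "wp_to_one (\<lambda>n \<omega>. \<forall>ij\<in>UNIV. \<bar>sample_mean (\<lambda>y. H y $ fst ij $ snd ij) n \<omega>
                                    - integral\<^sup>L D (\<lambda>y. H y $ fst ij $ snd ij)\<bar> \<le> \<eta>')"
    by (intro wp_to_one_finite_Ball) (auto simp: wp_to_one_def intro: whp_lln[OF int \<eta>'])
  then have "whp M e (\<lambda>n \<omega>. \<forall>ij\<in>UNIV. \<bar>sample_mean (\<lambda>y. H y $ fst ij $ snd ij) n \<omega>
                                    - integral\<^sup>L D (\<lambda>y. H y $ fst ij $ snd ij)\<bar> \<le> \<eta>')"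
    using e unfolding wp_to_one_def by blast
  then show ?thesis
  proof (rule whp_mono[where ?N0.0 = 0])
    fix n \<omega> assume entries: "\<forall>ij\<in>UNIV. \<bar>sample_mean (\<lambda>y. H y $ fst ij $ snd ij) n \<omega>
                                    - integral\<^sup>L D (\<lambda>y. H y $ fst ij $ snd ij)\<bar> \<le> \<eta>'"
    have "entry_norm ((1 / real n) *\<^sub>R (\<Sum>k<n. H (Y k \<omega>)) - (\<chi> i j. integral\<^sup>L D (\<lambda>y. H y $ i $ j)))
        \<le> real CARD('q) * real CARD('p) * \<eta>'"
      using entries by (intro entry_norm_le_const) (auto simp: sample_mean_def sum_component)
    then show "entry_norm ((1 / real n) *\<^sub>R (\<Sum>k<n. H (Y k \<omega>))
                              - (\<chi> i j. integral\<^sup>L D (\<lambda>y. H y $ i $ j))) \<le> \<eta>"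
      unfolding \<eta>'_def by simp
  qed simp
qed

end

section \<open>The deterministic core: one sample\<close>

definition loo_constant :: "real \<Rightarrow> real \<Rightarrow> real" where
  "loo_constant K c = K * (2 * K / c)\<^sup>2 + (K / c) * (2 * K + K * (2 * K / c) + K * (2 * K / c)\<^sup>2)"

text \<open>Write \<open>G k\<close>, \<open>Hs k\<close> for the gradient and Hessian of
  \<open>\<phi>(\<cdot>, Y\<^sub>k)\<close> at \<open>\<theta>\<close>, \<open>Gloo i k\<close> for the gradient of \<open>\<phi>(\<cdot>, Y\<^sub>k)\<close> at the leave-one-out
  estimate \<open>\<theta>\<^sub>-\<^sub>i\<close>, \<open>\<Delta> i = \<theta>\<^sub>-\<^sub>i - \<theta>\<close>, \<open>V i\<close> for the gradient of \<open>\<psi>(g\<^sup>\<theta>, Y\<^sub>i)\<close> at \<open>\<theta>\<close>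
  and \<open>r i = \<psi>(g\<^sup>\<theta>\<^sup>-\<^sup>i, Y\<^sub>i) - \<psi>(g\<^sup>\<theta>, Y\<^sub>i)\<close>.\<close>
locale loo_sample =
  fixes n :: nat and K c :: real
    and G V \<Delta> :: "nat \<Rightarrow> real^'p" and Gloo :: "nat \<Rightarrow> nat \<Rightarrow> real^'p"
    and Hs :: "nat \<Rightarrow> real^'p^'p" and r wH wV hb :: "nat \<Rightarrow> real"
  assumes n2: "n \<ge> 2"
    and stationary: "(\<Sum>k<n. G k) = 0"
    and loo_stationary: "\<And>i. i < n \<Longrightarrow> (\<Sum>k\<in>{..<n} - {i}. Gloo i k) = 0"
    and gradient_taylor: "\<And>i k. i < n \<Longrightarrow> k < n \<Longrightarrow>
          norm (Gloo i k - G k - Hs k *v \<Delta> i) \<le> wH k * (norm (\<Delta> i))\<^sup>2"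
    and value_taylor: "\<And>i. i < n \<Longrightarrow> \<bar>r i - V i \<bullet> \<Delta> i\<bar> \<le> wV i * (norm (\<Delta> i))\<^sup>2"
    and hessian_symmetric: "\<And>k. k < n \<Longrightarrow> transpose (Hs k) = Hs k"
    and c: "c > 0"
    and pos_def: "\<And>x. x \<bullet> (((1 / real n) *\<^sub>R (\<Sum>k<n. Hs k)) *v x) \<ge> c * (norm x)\<^sup>2"
    and hessian_envelope: "\<And>k. k < n \<Longrightarrow> entry_norm (Hs k) \<le> hb k"
    and envelope_small: "\<And>k. k < n \<Longrightarrow> hb k \<le> c / 4 * real n"
    and gradients_bounded: "\<And>i. i < n \<Longrightarrow> norm (G i) \<le> K" "\<And>i. i < n \<Longrightarrow> norm (V i) \<le> K"
    and means_bounded: "(1 / real n) * (\<Sum>k<n. wH k) \<le> K" "(1 / real n) * (\<Sum>k<n. wV k) \<le> K"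
      "(1 / real n) * (\<Sum>k<n. hb k) \<le> K"
    and weights_nonneg: "\<And>k. wH k \<ge> 0" "\<And>k. wV k \<ge> 0"
    and shifts_small: "\<And>i. i < n \<Longrightarrow> K * norm (\<Delta> i) \<le> c / 4"
begin

abbreviation "Hmean \<equiv> (1 / real n) *\<^sub>R (\<Sum>k<n. Hs k)"
abbreviation "A \<equiv> matrix_inv Hmean"
abbreviation "d i \<equiv> (1 / (real n - 1)) *\<^sub>R G i"
abbreviation "\<delta> \<equiv> 2 * K / (c * real n)"

lemma n_pos: "real n > 0" using n2 by simp

lemma K_nonneg: "K \<ge> 0"
  using gradients_bounded(1)[of 0] n2 norm_ge_zero[of "G 0"] by linarith

lemma A_inverse: "A ** Hmean = mat 1" "norm (A *v y) \<le> norm y / c"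
  using pos_def_matrix_inv[OF c pos_def] by auto

lemma A_symmetric: "transpose A = A"
proof -
  have "transpose Hmean = Hmean"
    using hessian_symmetric by (simp add: transpose_def vec_eq_iff sum_component)
  then show ?thesis
    using matrix_inv_symmetric pos_def_matrix_inv[OF c pos_def] by blast
qed

text \<open>The leave-one-out first-order condition, expanded around \<open>\<theta>\<close>:
  \<open>n H \<Delta>\<^sub>i = G\<^sub>i - R\<^sub>i + Hs\<^sub>i \<Delta>\<^sub>i\<close> with a second-order remainder \<open>R\<^sub>i\<close>.\<close>
definition remainder :: "nat \<Rightarrow> real^'p" where
  "remainder i = (\<Sum>k\<in>{..<n} - {i}. Gloo i k - G k - Hs k *v \<Delta> i)"

lemma first_order_identity:
  assumes i: "i < n"
  shows "real n *\<^sub>R (Hmean *v \<Delta> i) = G i - remainder i + Hs i *v \<Delta> i"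
proof -
  have "(\<Sum>k\<in>{..<n} - {i}. G k) = - G i" using stationary i by (simp add: sum_diff1)
  moreover have "(\<Sum>k\<in>{..<n} - {i}. Hs k *v \<Delta> i) = real n *\<^sub>R (Hmean *v \<Delta> i) - Hs i *v \<Delta> i"
    using i n_pos by (simp add: sum_diff1 matrix_vector_mult_sum scaleR_matrix_vector_assoc)
  ultimately have "remainder i = G i - (real n *\<^sub>R (Hmean *v \<Delta> i) - Hs i *v \<Delta> i)"
    using loo_stationary[OF i] unfolding remainder_def by (simp add: sum_subtractf)
  then show ?thesis by (simp add: algebra_simps)
qed

lemma remainder_bound:
  assumes i: "i < n"
  shows "norm (remainder i) \<le> K * real n * (norm (\<Delta> i))\<^sup>2"
proof -
  have "norm (remainder i) \<le> (\<Sum>k\<in>{..<n} - {i}. wH k * (norm (\<Delta> i))\<^sup>2)"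
    unfolding remainder_def using gradient_taylor i by (intro order_trans[OF norm_sum sum_mono]) auto
  also have "\<dots> \<le> (\<Sum>k<n. wH k) * (norm (\<Delta> i))\<^sup>2"
    by (simp add: sum_distrib_right[symmetric] mult_right_mono sum_mono2 weights_nonneg)
  also have "\<dots> \<le> K * real n * (norm (\<Delta> i))\<^sup>2"
    using means_bounded(1) n_pos by (intro mult_right_mono) (simp_all add: field_simps)
  finally show ?thesis .
qed

lemma shift_bound:
  assumes i: "i < n"
  shows "norm (\<Delta> i) \<le> \<delta>"
proof -
  have "c * (norm (\<Delta> i))\<^sup>2 \<le> norm (\<Delta> i) * norm (Hmean *v \<Delta> i)"
    using pos_def[of "\<Delta> i"] by (rule order_trans[OF _ order_trans[OF abs_ge_self Cauchy_Schwarz_ineq2]])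
  then have "c * norm (\<Delta> i) \<le> norm (Hmean *v \<Delta> i)"
    by (cases "\<Delta> i = 0") (auto simp: power2_eq_square)
  then have "real n * (c * norm (\<Delta> i)) \<le> norm (G i - remainder i + Hs i *v \<Delta> i)"
    using first_order_identity[OF i] n_pos by (metis mult_left_mono norm_scaleR abs_of_pos less_imp_le)
  also have "\<dots> \<le> norm (G i) + norm (remainder i) + norm (Hs i *v \<Delta> i)"
    by (rule order_trans[OF norm_triangle_ineq add_right_mono[OF norm_triangle_ineq4]])
  also have "\<dots> \<le> K + real n * (K * norm (\<Delta> i)) * norm (\<Delta> i) + hb i * norm (\<Delta> i)"
    using gradients_bounded(1)[OF i] remainder_bound[OF i]
      norm_matrix_vector_le[of "Hs i" "\<Delta> i"] hessian_envelope[OF i]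
    by (smt (verit) mult.assoc mult.commute mult_right_mono norm_ge_zero power2_eq_square)
  also have "\<dots> \<le> K + real n * (c / 4) * norm (\<Delta> i) + (c / 4 * real n) * norm (\<Delta> i)"
    using shifts_small[OF i] envelope_small[OF i] n_pos
    by (intro add_mono mult_right_mono mult_left_mono) auto
  finally have "real n * c * norm (\<Delta> i) \<le> 2 * K" by (simp add: algebra_simps)
  then show ?thesis using c n_pos by (simp add: field_simps)
qed

lemma linearized_shift_error:
  assumes i: "i < n"
  shows "norm (Hmean *v \<Delta> i - d i) \<le> 2 * K / (real n)\<^sup>2 + (1 / real n) * (hb i * \<delta> + K * real n * \<delta>\<^sup>2)"
proof -
  have "Hmean *v \<Delta> i = (1 / real n) *\<^sub>R (real n *\<^sub>R (Hmean *v \<Delta> i))"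
    using n_pos by simp
  then have "Hmean *v \<Delta> i = (1 / real n) *\<^sub>R (G i - remainder i + Hs i *v \<Delta> i)"
    unfolding first_order_identity[OF i] .
  then have eq: "Hmean *v \<Delta> i - d i
      = (1 / real n - 1 / (real n - 1)) *\<^sub>R G i + (1 / real n) *\<^sub>R (Hs i *v \<Delta> i - remainder i)"
    by (simp add: algebra_simps)
  have N2: "real n \<ge> 2" using n2 by simp
  have "\<bar>1 / real n - 1 / (real n - 1)\<bar> = 1 / (real n * (real n - 1))"
    using N2 by (simp add: field_simps)
  also have "\<dots> \<le> 2 / (real n)\<^sup>2"
    using N2 by (simp add: field_simps power2_eq_square)
  finally have coeff: "\<bar>1 / real n - 1 / (real n - 1)\<bar> \<le> 2 / (real n)\<^sup>2" .
  have "norm (Hs i *v \<Delta> i - remainder i) \<le> hb i * \<delta> + K * real n * \<delta>\<^sup>2"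
  proof -
    have "norm (Hs i *v \<Delta> i) \<le> hb i * \<delta>"
      using norm_matrix_vector_le[of "Hs i" "\<Delta> i"] hessian_envelope[OF i] shift_bound[OF i]
        entry_norm_nonneg[of "Hs i"] by (meson mult_mono norm_ge_zero order_trans)
    moreover have "norm (remainder i) \<le> K * real n * \<delta>\<^sup>2"
      using remainder_bound[OF i] shift_bound[OF i] K_nonneg n_pos
      by (meson mult_left_mono mult_nonneg_nonneg norm_ge_zero of_nat_0_le_iff order_trans power_mono)
    ultimately show ?thesis using norm_triangle_ineq4[of "Hs i *v \<Delta> i" "remainder i"] by linarith
  qed
  then have "norm ((1 / real n) *\<^sub>R (Hs i *v \<Delta> i - remainder i)) \<le> (1 / real n) * (hb i * \<delta> + K * real n * \<delta>\<^sup>2)"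
    using n_pos by (simp add: divide_right_mono)
  moreover have "norm ((1 / real n - 1 / (real n - 1)) *\<^sub>R G i) \<le> 2 / (real n)\<^sup>2 * K"
    unfolding norm_scaleR using coeff gradients_bounded(1)[OF i] by (intro mult_mono) auto
  ultimately show ?thesis
    using norm_triangle_ineq[of "(1 / real n - 1 / (real n - 1)) *\<^sub>R G i"
        "(1 / real n) *\<^sub>R (Hs i *v \<Delta> i - remainder i)"]
    unfolding eq by simp
qed

lemma term_error:
  assumes i: "i < n"
  shows "\<bar>r i - d i \<bullet> (A *v V i)\<bar>
    \<le> wV i * \<delta>\<^sup>2 + (K / c) * (2 * K / (real n)\<^sup>2 + (1 / real n) * (hb i * \<delta> + K * real n * \<delta>\<^sup>2))"
proof -
  have "d i \<bullet> (A *v V i) = (A *v d i) \<bullet> V i" by (rule symmetric_inner_swap[OF A_symmetric])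
  also have "A *v d i = \<Delta> i - A *v (Hmean *v \<Delta> i - d i)"
    using A_inverse(1) by (simp add: matrix_vector_mul_assoc matrix_vector_mult_diff_distrib)
  finally have "r i - d i \<bullet> (A *v V i) = (r i - V i \<bullet> \<Delta> i) + V i \<bullet> (A *v (Hmean *v \<Delta> i - d i))"
    by (simp add: inner_diff_right inner_commute)
  also have "\<bar>\<dots>\<bar> \<le> wV i * \<delta>\<^sup>2 + K * (norm (Hmean *v \<Delta> i - d i) / c)"
  proof (rule order_trans[OF abs_triangle_ineq add_mono])
    show "\<bar>r i - V i \<bullet> \<Delta> i\<bar> \<le> wV i * \<delta>\<^sup>2"
      using value_taylor[OF i] shift_bound[OF i] weights_nonneg(2)[of i]
      by (meson mult_left_mono norm_ge_zero order_trans power_mono)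
    show "\<bar>V i \<bullet> (A *v (Hmean *v \<Delta> i - d i))\<bar> \<le> K * (norm (Hmean *v \<Delta> i - d i) / c)"
      using Cauchy_Schwarz_ineq2 gradients_bounded(2)[OF i] A_inverse(2)
      by (meson mult_mono norm_ge_zero order_trans K_nonneg)
  qed
  also have "\<dots> \<le> wV i * \<delta>\<^sup>2 + K * ((2 * K / (real n)\<^sup>2 + (1 / real n) * (hb i * \<delta> + K * real n * \<delta>\<^sup>2)) / c)"
    using linearized_shift_error[OF i] K_nonneg c by (intro add_left_mono mult_left_mono divide_right_mono) auto
  finally show ?thesis by simp
qed

theorem loo_expansion:
  "\<bar>(1 / real n) * (\<Sum>i<n. r i)
      - trace (A ** (\<chi> a b. (1 / real n) * (\<Sum>i<n. V i $ a * d i $ b)))\<bar>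
    \<le> loo_constant K c / (real n)\<^sup>2"
proof -
  define err where "err i = r i - d i \<bullet> (A *v V i)" for i
  have "(1 / real n) * (\<Sum>i<n. r i) - trace (A ** (\<chi> a b. (1 / real n) * (\<Sum>i<n. V i $ a * d i $ b)))
      = (1 / real n) * (\<Sum>i<n. err i)"
    unfolding trace_outer_products err_def by (simp add: sum_subtractf right_diff_distrib)
  also have "\<bar>\<dots>\<bar> \<le> (1 / real n) * (\<Sum>i<n. \<bar>err i\<bar>)"
    using n_pos by (simp add: abs_mult sum_abs divide_right_mono)
  also have "\<dots> \<le> (1 / real n) * (\<Sum>i<n. wV i * \<delta>\<^sup>2
        + (K / c) * (2 * K / (real n)\<^sup>2 + (1 / real n) * (hb i * \<delta> + K * real n * \<delta>\<^sup>2)))"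
    using n_pos term_error unfolding err_def by (intro mult_left_mono sum_mono) auto
  also have "\<dots> = ((1 / real n) * (\<Sum>i<n. wV i)) * \<delta>\<^sup>2 + (K / c) * (2 * K / (real n)\<^sup>2 + K * \<delta>\<^sup>2)
        + (K / c) * (\<delta> / real n) * ((1 / real n) * (\<Sum>i<n. hb i))"
  proof -
    define \<alpha> where "\<alpha> = (K / c) * (2 * K / (real n)\<^sup>2 + K * \<delta>\<^sup>2)"
    define \<beta> where "\<beta> = (K / c) * (\<delta> / real n)"
    have "wV i * \<delta>\<^sup>2 + (K / c) * (2 * K / (real n)\<^sup>2 + (1 / real n) * (hb i * \<delta> + K * real n * \<delta>\<^sup>2))
        = wV i * \<delta>\<^sup>2 + \<alpha> + \<beta> * hb i" for i
      unfolding \<alpha>_def \<beta>_def using n_pos by (simp add: algebra_simps)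
    then have "(\<Sum>i<n. wV i * \<delta>\<^sup>2 + (K / c) * (2 * K / (real n)\<^sup>2 + (1 / real n) * (hb i * \<delta> + K * real n * \<delta>\<^sup>2)))
        = (\<Sum>i<n. wV i) * \<delta>\<^sup>2 + real n * \<alpha> + \<beta> * (\<Sum>i<n. hb i)"
      by (simp add: sum.distrib sum_distrib_left sum_distrib_right)
    then show ?thesis unfolding \<alpha>_def[symmetric] \<beta>_def[symmetric]
      using n_pos by (simp add: distrib_left)
  qed
  also have "\<dots> \<le> K * \<delta>\<^sup>2 + (K / c) * (2 * K / (real n)\<^sup>2 + K * \<delta>\<^sup>2) + (K / c) * (\<delta> / real n) * K"
    using means_bounded K_nonneg c n_pos
    by (intro add_mono mult_right_mono mult_left_mono order_refl) auto
  also have "\<dots> = loo_constant K c / (real n)\<^sup>2"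
    unfolding loo_constant_def using n_pos c by (simp add: field_simps power2_eq_square)
  finally show ?thesis .
qed

end

section \<open>The statistical model\<close>

text \<open>The assumptions of the theorem, with the two domination hypotheses localised to one common
  ball \<open>ball \<theta>\<^sub>0 \<rho>\<close> inside \<open>\<Theta>\<close>, with dominating functions \<open>m_phi\<close> and \<open>m_psi\<close>.\<close>
locale loo_cv_model = iid_sample M S D Y
  for M :: "'a measure" and S D :: "'y measure" and Y :: "nat \<Rightarrow> 'a \<Rightarrow> 'y" +
  fixes \<Theta> :: "(real^'p) set" and \<theta>0 :: "real^'p" and \<rho> :: real
    and phi :: "real^'p \<Rightarrow> 'y \<Rightarrow> real" and Dphi :: "real^'p \<Rightarrow> 'y \<Rightarrow> real^'p"
    and Hphi :: "real^'p \<Rightarrow> 'y \<Rightarrow> real^'p^'p" and Tphi :: "real^'p \<Rightarrow> 'y \<Rightarrow> real^'p \<Rightarrow> real^'p^'p"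
    and g :: "real^'p \<Rightarrow> 'y \<Rightarrow> real" and psi :: "('y \<Rightarrow> real) \<Rightarrow> 'y \<Rightarrow> real"
    and Dpsi :: "real^'p \<Rightarrow> 'y \<Rightarrow> real^'p" and Hpsi :: "real^'p \<Rightarrow> 'y \<Rightarrow> real^'p^'p"
    and m_phi m_psi :: "'y \<Rightarrow> real"
    and hat :: "nat \<Rightarrow> 'a \<Rightarrow> real^'p" and loo :: "nat \<Rightarrow> nat \<Rightarrow> 'a \<Rightarrow> real^'p"
  assumes phi_D1: "\<And>\<theta> y. \<theta> \<in> interior \<Theta> \<Longrightarrow> y \<in> space S \<Longrightarrow>
                   ((\<lambda>t. phi t y) has_derivative (\<lambda>h. Dphi \<theta> y \<bullet> h)) (at \<theta>)"
    and phi_D2: "\<And>\<theta> y. \<theta> \<in> interior \<Theta> \<Longrightarrow> y \<in> space S \<Longrightarrow>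
                   ((\<lambda>t. Dphi t y) has_derivative (\<lambda>h. Hphi \<theta> y *v h)) (at \<theta>)"
    and phi_D3: "\<And>\<theta> y. \<theta> \<in> interior \<Theta> \<Longrightarrow> y \<in> space S \<Longrightarrow>
                   ((\<lambda>t. Hphi t y) has_derivative Tphi \<theta> y) (at \<theta>)"
    and psi_D1: "\<And>\<theta> y. \<theta> \<in> interior \<Theta> \<Longrightarrow> y \<in> space S \<Longrightarrow>
                   ((\<lambda>t. psi (g t) y) has_derivative (\<lambda>h. Dpsi \<theta> y \<bullet> h)) (at \<theta>)"
    and psi_D2: "\<And>\<theta> y. \<theta> \<in> interior \<Theta> \<Longrightarrow> y \<in> space S \<Longrightarrow>
                   ((\<lambda>t. Dpsi t y) has_derivative (\<lambda>h. Hpsi \<theta> y *v h)) (at \<theta>)"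
    and radius: "\<rho> > 0" and ball_interior: "ball \<theta>0 \<rho> \<subseteq> interior \<Theta>"
    and phi_dom: "integrable D m_phi"
      "\<And>t y i j k. t \<in> ball \<theta>0 \<rho> \<Longrightarrow> y \<in> space S \<Longrightarrow> \<bar>Tphi t y (axis k 1) $ i $ j\<bar> \<le> m_phi y"
    and psi_dom: "integrable D m_psi"
      "\<And>t y i j. t \<in> ball \<theta>0 \<rho> \<Longrightarrow> y \<in> space S \<Longrightarrow> \<bar>Hpsi t y $ i $ j\<bar> \<le> m_psi y"
    and H0_int: "\<And>i j. integrable D (\<lambda>y. Hphi \<theta>0 y $ i $ j)"
    and H0_pd: "\<And>x. x \<noteq> 0 \<Longrightarrow> x \<bullet> ((\<chi> i j. integral\<^sup>L D (\<lambda>y. Hphi \<theta>0 y $ i $ j)) *v x) > 0"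
    and hat_in: "\<And>n \<omega>. n \<ge> 2 \<Longrightarrow> \<omega> \<in> space M \<Longrightarrow> hat n \<omega> \<in> interior \<Theta>"
    and hat_min: "\<And>n \<omega> \<theta>. n \<ge> 2 \<Longrightarrow> \<omega> \<in> space M \<Longrightarrow> \<theta> \<in> \<Theta> \<Longrightarrow>
                   PhiEmp phi Y n \<omega> (hat n \<omega>) \<le> PhiEmp phi Y n \<omega> \<theta>"
    and loo_in: "\<And>n i \<omega>. n \<ge> 2 \<Longrightarrow> i < n \<Longrightarrow> \<omega> \<in> space M \<Longrightarrow> loo n i \<omega> \<in> interior \<Theta>"
    and loo_min: "\<And>n i \<omega> \<theta>. n \<ge> 2 \<Longrightarrow> i < n \<Longrightarrow> \<omega> \<in> space M \<Longrightarrow> \<theta> \<in> \<Theta> \<Longrightarrow>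
                   PhiLoo phi Y n i \<omega> (loo n i \<omega>) \<le> PhiLoo phi Y n i \<omega> \<theta>"
    and hat_rate: "bigOp M (\<lambda>n \<omega>. norm (hat n \<omega> - \<theta>0)) (\<lambda>n. 1 / sqrt (real n))"
    and loo_rate: "bigOp M (\<lambda>n \<omega>. Max ((\<lambda>i. norm (loo n i \<omega> - \<theta>0)) ` {..<n})) (\<lambda>n. 1 / sqrt (real n))"
    and Dphi_bd: "bigOp M (\<lambda>n \<omega>. Max ((\<lambda>i. norm (Dphi (hat n \<omega>) (Y i \<omega>))) ` {..<n})) (\<lambda>n. 1)"
    and Dpsi_bd: "bigOp M (\<lambda>n \<omega>. Max ((\<lambda>i. norm (Dpsi (hat n \<omega>) (Y i \<omega>))) ` {..<n})) (\<lambda>n. 1)"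
begin

text \<open>Integrable Lipschitz moduli: \<open>wH\<close> for \<open>\<partial>\<^sup>2\<phi>\<close> (in entry norm) and \<open>wV\<close> for \<open>\<partial>\<psi>\<close> on the ball,
  and an integrable envelope \<open>hess_env\<close> of \<open>\<partial>\<^sup>2\<phi>\<close> on the ball.\<close>
definition wH :: "'y \<Rightarrow> real" where "wH y = real CARD('p)^5 * m_phi y"
definition wV :: "'y \<Rightarrow> real" where "wV y = real CARD('p)^2 * m_psi y"
definition hess_env :: "'y \<Rightarrow> real" where "hess_env y = entry_norm (Hphi \<theta>0 y) + \<rho> * wH y"

lemma ball_subset: "t \<in> ball \<theta>0 \<rho> \<Longrightarrow> t \<in> interior \<Theta>"
  using ball_interior by blast

lemma weights_nonneg: "y \<in> space S \<Longrightarrow> wH y \<ge> 0" "y \<in> space S \<Longrightarrow> wV y \<ge> 0"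
  using phi_dom(2)[of \<theta>0 y] psi_dom(2)[of \<theta>0 y] radius unfolding wH_def wV_def
  by (meson abs_ge_zero centre_in_ball mult_nonneg_nonneg of_nat_0_le_iff order_trans zero_le_power)+

lemma integrable_weights: "integrable D wH" "integrable D wV" "integrable D hess_env"
  using phi_dom(1) psi_dom(1) H0_int unfolding wH_def wV_def hess_env_def entry_norm_def by auto

lemma hessian_lipschitz:
  assumes "t \<in> ball \<theta>0 \<rho>" "s \<in> ball \<theta>0 \<rho>" and y: "y \<in> space S"
  shows "entry_norm (Hphi s y - Hphi t y) \<le> wH y * norm (s - t)"
proof -
  have "norm (Hphi s y - Hphi t y) \<le> (real CARD('p)^3 * m_phi y) * norm (s - t)"
  proof (rule lipschitz_of_derivative_bound[OF convex_ball assms(1,2)])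
    fix x assume x: "x \<in> ball \<theta>0 \<rho>"
    show "((\<lambda>u. Hphi u y) has_derivative Tphi x y) (at x)"
      using phi_D3 ball_subset[OF x] y by blast
    then show "onorm (Tphi x y) \<le> real CARD('p)^3 * m_phi y"
      using phi_dom(2) x y by (intro onorm_tensor_le) (auto intro: has_derivative_bounded_linear)
  qed
  then have "entry_norm (Hphi s y - Hphi t y)
      \<le> real CARD('p) * real CARD('p) * ((real CARD('p)^3 * m_phi y) * norm (s - t))"
    using entry_norm_le_norm[of "Hphi s y - Hphi t y"] by (auto intro: order_trans mult_left_mono)
  moreover have "real CARD('p)^5 = real CARD('p) * real CARD('p) * real CARD('p)^3"
    by (simp add: eval_nat_numeral)
  ultimately show ?thesis unfolding wH_def by (simp add: mult.assoc)
qed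

lemma gradient_taylor:
  assumes "t \<in> ball \<theta>0 \<rho>" "s \<in> ball \<theta>0 \<rho>" and y: "y \<in> space S"
  shows "norm (Dphi s y - Dphi t y - Hphi t y *v (s - t)) \<le> wH y * (norm (s - t))\<^sup>2"
proof (rule linearization_remainder[OF convex_ball assms(1,2), where f'="\<lambda>x h. Hphi x y *v h"])
  fix x assume x: "x \<in> ball \<theta>0 \<rho>"
  show "((\<lambda>u. Dphi u y) has_derivative (\<lambda>h. Hphi x y *v h)) (at x)"
    using phi_D2 ball_subset[OF x] y by blast
  have "onorm (\<lambda>h. Hphi x y *v h - Hphi t y *v h) \<le> entry_norm (Hphi x y - Hphi t y)"
    using onorm_matrix_le[of "Hphi x y - Hphi t y"] by (simp add: matrix_vector_mult_diff_rdistrib)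
  also have "\<dots> \<le> wH y * norm (x - t)" by (rule hessian_lipschitz[OF assms(1) x y])
  finally show "onorm (\<lambda>h. Hphi x y *v h - Hphi t y *v h) \<le> wH y * norm (x - t)" .
qed (use weights_nonneg y in auto)

lemma value_taylor:
  assumes "t \<in> ball \<theta>0 \<rho>" "s \<in> ball \<theta>0 \<rho>" and y: "y \<in> space S"
  shows "\<bar>psi (g s) y - psi (g t) y - Dpsi t y \<bullet> (s - t)\<bar> \<le> wV y * (norm (s - t))\<^sup>2"
proof -
  have "norm (psi (g s) y - psi (g t) y - Dpsi t y \<bullet> (s - t)) \<le> wV y * (norm (s - t))\<^sup>2"
  proof (rule linearization_remainder[OF convex_ball assms(1,2), where f'="\<lambda>x h. Dpsi x y \<bullet> h"])
    fix x assume x: "x \<in> ball \<theta>0 \<rho>"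
    show "((\<lambda>u. psi (g u) y) has_derivative (\<lambda>h. Dpsi x y \<bullet> h)) (at x)"
      using psi_D1 ball_subset[OF x] y by blast
    have lip: "norm (Dpsi x y - Dpsi t y) \<le> wV y * norm (x - t)" unfolding wV_def
    proof (rule lipschitz_of_derivative_bound[OF convex_ball assms(1) x])
      fix z assume z: "z \<in> ball \<theta>0 \<rho>"
      show "((\<lambda>u. Dpsi u y) has_derivative (\<lambda>h. Hpsi z y *v h)) (at z)"
        using psi_D2 ball_subset[OF z] y by blast
      have "entry_norm (Hpsi z y) \<le> real CARD('p) * real CARD('p) * m_psi y"
        by (rule entry_norm_le_const) (use psi_dom(2) z y in auto)
      then show "onorm (\<lambda>h. Hpsi z y *v h) \<le> real CARD('p)^2 * m_psi y"
        using onorm_matrix_le[of "Hpsi z y"] by (simp add: power2_eq_square)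
    qed
    show "onorm (\<lambda>h. Dpsi x y \<bullet> h - Dpsi t y \<bullet> h) \<le> wV y * norm (x - t)"
    proof (rule onorm_le)
      fix h
      have "norm (Dpsi x y \<bullet> h - Dpsi t y \<bullet> h) \<le> norm (Dpsi x y - Dpsi t y) * norm h"
        using Cauchy_Schwarz_ineq2[of "Dpsi x y - Dpsi t y" h] by (simp add: inner_diff_left)
      also have "\<dots> \<le> wV y * norm (x - t) * norm h"
        using lip by (rule mult_right_mono) simp
      finally show "norm (Dpsi x y \<bullet> h - Dpsi t y \<bullet> h) \<le> wV y * norm (x - t) * norm h" .
    qed
  qed (use weights_nonneg y in auto)
  then show ?thesis by simp
qed

lemma hessian_envelope:
  assumes "t \<in> ball \<theta>0 \<rho>" and y: "y \<in> space S"
  shows "entry_norm (Hphi t y) \<le> hess_env y"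
proof -
  have "entry_norm (Hphi t y) \<le> entry_norm (Hphi \<theta>0 y) + entry_norm (Hphi t y - Hphi \<theta>0 y)"
    using entry_norm_triangle[of "Hphi \<theta>0 y" "Hphi t y - Hphi \<theta>0 y"] by simp
  also have "entry_norm (Hphi t y - Hphi \<theta>0 y) \<le> wH y * norm (t - \<theta>0)"
    using hessian_lipschitz[OF _ assms(1) y] radius by simp
  also have "\<dots> \<le> wH y * \<rho>"
    using assms(1) weights_nonneg(1)[OF y] by (intro mult_left_mono) (auto simp: dist_norm norm_minus_commute)
  finally show ?thesis unfolding hess_env_def by (simp add: mult.commute)
qed

lemma hessian_transpose: "t \<in> interior \<Theta> \<Longrightarrow> y \<in> space S \<Longrightarrow> transpose (Hphi t y) = Hphi t y"
  using hessian_symmetric[of "interior \<Theta>" t "\<lambda>u. phi u y" "\<lambda>u. Dphi u y"] phi_D1 phi_D2 by blast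

lemma hat_stationary:
  assumes "n \<ge> 2" "\<omega> \<in> space M"
  shows "(\<Sum>k<n. Dphi (hat n \<omega>) (Y k \<omega>)) = 0"
proof (rule gradient_sum_zero[where x="hat n \<omega>" and \<Theta>=\<Theta> and a="1 / real n"])
  show "hat n \<omega> \<in> interior \<Theta>" using hat_in assms .
  show "1 / real n * (\<Sum>k<n. phi (hat n \<omega>) (Y k \<omega>)) \<le> 1 / real n * (\<Sum>k<n. phi \<theta> (Y k \<omega>))"
    if "\<theta> \<in> \<Theta>" for \<theta>
    using hat_min[OF assms that] unfolding PhiEmp_def .
  show "((\<lambda>\<theta>. phi \<theta> (Y k \<omega>)) has_derivative (\<lambda>h. Dphi (hat n \<omega>) (Y k \<omega>) \<bullet> h)) (at (hat n \<omega>))" for k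
    using phi_D1 hat_in[OF assms] Y_in_space[OF assms(2)] by blast
qed (use assms in auto)

lemma loo_stationary:
  assumes "n \<ge> 2" "i < n" "\<omega> \<in> space M"
  shows "(\<Sum>k\<in>{..<n} - {i}. Dphi (loo n i \<omega>) (Y k \<omega>)) = 0"
proof (rule gradient_sum_zero[where x="loo n i \<omega>" and \<Theta>=\<Theta> and a="1 / (real n - 1)"])
  show "loo n i \<omega> \<in> interior \<Theta>" using loo_in assms .
  show "1 / (real n - 1) * (\<Sum>k\<in>{..<n} - {i}. phi (loo n i \<omega>) (Y k \<omega>))
      \<le> 1 / (real n - 1) * (\<Sum>k\<in>{..<n} - {i}. phi \<theta> (Y k \<omega>))" if "\<theta> \<in> \<Theta>" for \<theta>
    using loo_min[OF assms that] unfolding PhiLoo_def .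
  show "((\<lambda>\<theta>. phi \<theta> (Y k \<omega>)) has_derivative (\<lambda>h. Dphi (loo n i \<omega>) (Y k \<omega>) \<bullet> h)) (at (loo n i \<omega>))" for k
    using phi_D1 loo_in[OF assms] Y_in_space[OF assms(3)] by blast
qed (use assms in auto)

abbreviation "E0 \<equiv> \<chi> i j. integral\<^sup>L D (\<lambda>y. Hphi \<theta>0 y $ i $ j)"

definition sample_bounds :: "real \<Rightarrow> nat \<Rightarrow> 'a \<Rightarrow> bool" where
  "sample_bounds K n \<omega> \<longleftrightarrow>
     norm (hat n \<omega> - \<theta>0) \<le> K / sqrt (real n) \<and> (\<forall>i<n. norm (loo n i \<omega> - \<theta>0) \<le> K / sqrt (real n)) \<and>
     (\<forall>i<n. norm (Dphi (hat n \<omega>) (Y i \<omega>)) \<le> K) \<and> (\<forall>i<n. norm (Dpsi (hat n \<omega>) (Y i \<omega>)) \<le> K) \<and>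
     sample_mean wH n \<omega> \<le> K \<and> sample_mean wV n \<omega> \<le> K \<and> sample_mean hess_env n \<omega> \<le> K"

text \<open>On the event \<open>good c0 K n\<close> all random quantities entering the expansion obey the bounds
  that the deterministic analysis needs, with a single constant \<open>K\<close>; \<open>c0\<close> is a positive
  definiteness constant of the expected Hessian \<open>E0\<close>, and \<open>n\<close> is large relative to \<open>K\<close>.\<close>
definition good :: "real \<Rightarrow> real \<Rightarrow> nat \<Rightarrow> 'a \<Rightarrow> bool" where
  "good c0 K n \<omega> \<longleftrightarrow> n \<ge> 2 \<and> K / sqrt (real n) \<le> \<rho> / 2 \<and> K * (2 * K / sqrt (real n)) \<le> c0 / 8 \<and>
     sample_bounds K n \<omega> \<and> (\<forall>i<n. hess_env (Y i \<omega>) \<le> c0 / 8 * real n) \<and>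
     entry_norm ((1 / real n) *\<^sub>R (\<Sum>k<n. Hphi \<theta>0 (Y k \<omega>)) - E0) \<le> c0 / 4"

lemma good_estimates_near:
  assumes "good c0 K n \<omega>"
  shows "K \<ge> 0" "hat n \<omega> \<in> ball \<theta>0 \<rho>" "\<And>i. i < n \<Longrightarrow> loo n i \<omega> \<in> ball \<theta>0 \<rho>"
    and "\<And>i. i < n \<Longrightarrow> norm (loo n i \<omega> - hat n \<omega>) \<le> 2 * K / sqrt (real n)"
proof -
  have n: "n \<ge> 2" and rad: "K / sqrt (real n) \<le> \<rho> / 2"
    and th: "norm (hat n \<omega> - \<theta>0) \<le> K / sqrt (real n)"
    and lo: "\<And>i. i < n \<Longrightarrow> norm (loo n i \<omega> - \<theta>0) \<le> K / sqrt (real n)"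
    using assms unfolding good_def sample_bounds_def by auto
  have "0 \<le> K / sqrt (real n)" using th norm_ge_zero order_trans by blast
  then show "K \<ge> 0" using n by (simp add: zero_le_divide_iff)
  have inball: "x \<in> ball \<theta>0 \<rho>" if "norm (x - \<theta>0) \<le> K / sqrt (real n)" for x
    unfolding mem_ball dist_norm norm_minus_commute[of \<theta>0] using that rad radius by linarith
  show "hat n \<omega> \<in> ball \<theta>0 \<rho>" using inball[OF th] .
  show "loo n i \<omega> \<in> ball \<theta>0 \<rho>" if "i < n" for i using inball[OF lo[OF that]] .
  show "norm (loo n i \<omega> - hat n \<omega>) \<le> 2 * K / sqrt (real n)" if "i < n" for i
    using norm_triangle_ineq4[of "loo n i \<omega> - \<theta>0" "hat n \<omega> - \<theta>0"] lo[OF that] th by simp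
qed

lemma good_hessian_pos_def:
  assumes pd: "\<And>x. x \<bullet> (E0 *v x) \<ge> c0 * (norm x)\<^sup>2"
    and good: "good c0 K n \<omega>" and \<omega>: "\<omega> \<in> space M"
  shows "x \<bullet> (((1 / real n) *\<^sub>R (\<Sum>k<n. Hphi (hat n \<omega>) (Y k \<omega>))) *v x) \<ge> (c0 / 2) * (norm x)\<^sup>2"
proof (rule pos_def_perturb[OF pd])
  define th where "th = hat n \<omega>"
  have n: "real n > 0" and K: "K \<ge> 0" and th_ball: "th \<in> ball \<theta>0 \<rho>"
    using good good_estimates_near[OF good] unfolding good_def sample_bounds_def th_def by auto
  have "entry_norm (\<Sum>k<n. Hphi th (Y k \<omega>) - Hphi \<theta>0 (Y k \<omega>)) \<le> (\<Sum>k<n. wH (Y k \<omega>) * norm (th - \<theta>0))"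
    using hessian_lipschitz[OF _ th_ball Y_in_space[OF \<omega>]] radius
    by (intro order_trans[OF entry_norm_sum sum_mono]) auto
  then have "entry_norm ((1 / real n) *\<^sub>R (\<Sum>k<n. Hphi th (Y k \<omega>) - Hphi \<theta>0 (Y k \<omega>)))
      \<le> (1 / real n) * (\<Sum>k<n. wH (Y k \<omega>) * norm (th - \<theta>0))"
    using n by (simp add: entry_norm_scaleR divide_right_mono)
  also have "\<dots> = sample_mean wH n \<omega> * norm (th - \<theta>0)"
    unfolding sample_mean_def by (simp add: sum_distrib_right)
  also have "\<dots> \<le> K * (K / sqrt (real n))"
    using good K unfolding good_def sample_bounds_def th_def by (intro mult_mono) auto
  also have "\<dots> \<le> c0 / 4"
  proof -
    have "K * (2 * K / sqrt (real n)) \<le> c0 / 8" using good unfolding good_def sample_bounds_def by blast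
    moreover have "K * (K / sqrt (real n)) = K * (2 * K / sqrt (real n)) / 2" by simp
    moreover have "0 \<le> K * (K / sqrt (real n))" using K by simp
    ultimately show ?thesis by linarith
  qed
  finally have "entry_norm ((1 / real n) *\<^sub>R (\<Sum>k<n. Hphi th (Y k \<omega>)) - (1 / real n) *\<^sub>R (\<Sum>k<n. Hphi \<theta>0 (Y k \<omega>)))
      \<le> c0 / 4" by (simp add: sum_subtractf scaleR_diff_right)
  then show "entry_norm ((1 / real n) *\<^sub>R (\<Sum>k<n. Hphi (hat n \<omega>) (Y k \<omega>)) - E0) \<le> c0 / 2"
    using good entry_norm_triangle[of "(1 / real n) *\<^sub>R (\<Sum>k<n. Hphi th (Y k \<omega>)) - (1 / real n) *\<^sub>R (\<Sum>k<n. Hphi \<theta>0 (Y k \<omega>))"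
        "(1 / real n) *\<^sub>R (\<Sum>k<n. Hphi \<theta>0 (Y k \<omega>)) - E0"]
    unfolding good_def sample_bounds_def th_def by simp
qed

lemma cv_error_on_good_event:
  assumes c0: "c0 > 0" and pd: "\<And>x. x \<bullet> (E0 *v x) \<ge> c0 * (norm x)\<^sup>2"
    and good: "good c0 K n \<omega>" and \<omega>: "\<omega> \<in> space M"
  shows "\<bar>CV psi g Y loo n \<omega> - UACV psi g Dpsi Dphi Hphi Y hat n \<omega>\<bar> \<le> loo_constant K (c0 / 2) / (real n)\<^sup>2"
proof -
  define th where "th = hat n \<omega>"
  define lo where "lo i = loo n i \<omega>" for i
  have n2: "n \<ge> 2" using good unfolding good_def sample_bounds_def by blast
  note near = good_estimates_near[OF good, folded th_def lo_def]
  note YS = Y_in_space[OF \<omega>]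
  interpret loo_sample n K "c0 / 2" "\<lambda>k. Dphi th (Y k \<omega>)" "\<lambda>i. Dpsi th (Y i \<omega>)" "\<lambda>i. lo i - th"
    "\<lambda>i k. Dphi (lo i) (Y k \<omega>)" "\<lambda>k. Hphi th (Y k \<omega>)" "\<lambda>i. psi (g (lo i)) (Y i \<omega>) - psi (g th) (Y i \<omega>)"
    "\<lambda>k. wH (Y k \<omega>)" "\<lambda>k. wV (Y k \<omega>)" "\<lambda>k. hess_env (Y k \<omega>)"
  proof unfold_locales
    show "(\<Sum>k<n. Dphi th (Y k \<omega>)) = 0" unfolding th_def using hat_stationary[OF n2 \<omega>] .
    show "(\<Sum>k\<in>{..<n} - {i}. Dphi (lo i) (Y k \<omega>)) = 0" if "i < n" for i
      unfolding lo_def using loo_stationary[OF n2 that \<omega>] .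
    show "norm (Dphi (lo i) (Y k \<omega>) - Dphi th (Y k \<omega>) - Hphi th (Y k \<omega>) *v (lo i - th))
        \<le> wH (Y k \<omega>) * (norm (lo i - th))\<^sup>2" if "i < n" for i k
      using gradient_taylor[OF near(2) near(3)[OF that] YS] .
    show "\<bar>psi (g (lo i)) (Y i \<omega>) - psi (g th) (Y i \<omega>) - Dpsi th (Y i \<omega>) \<bullet> (lo i - th)\<bar>
        \<le> wV (Y i \<omega>) * (norm (lo i - th))\<^sup>2" if "i < n" for i
      using value_taylor[OF near(2) near(3)[OF that] YS] .
    show "transpose (Hphi th (Y k \<omega>)) = Hphi th (Y k \<omega>)" for k
      unfolding th_def using hessian_transpose[OF hat_in[OF n2 \<omega>] YS] .
    show "x \<bullet> (((1 / real n) *\<^sub>R (\<Sum>k<n. Hphi th (Y k \<omega>))) *v x) \<ge> c0 / 2 * (norm x)\<^sup>2" for x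
      unfolding th_def by (rule good_hessian_pos_def[OF pd good \<omega>])
    show "entry_norm (Hphi th (Y k \<omega>)) \<le> hess_env (Y k \<omega>)" for k
      using hessian_envelope[OF near(2) YS] .
    show "K * norm (lo i - th) \<le> c0 / 2 / 4" if "i < n" for i
    proof -
      have "K * norm (lo i - th) \<le> K * (2 * K / sqrt (real n))"
        by (rule mult_left_mono[OF near(4)[OF that] near(1)])
      then show ?thesis using good unfolding good_def sample_bounds_def by simp
    qed
  qed (use n2 c0 good weights_nonneg YS in \<open>auto simp: good_def sample_bounds_def sample_mean_def th_def\<close>)
  have "CV psi g Y loo n \<omega> - UACV psi g Dpsi Dphi Hphi Y hat n \<omega>
      = (1 / real n) * (\<Sum>i<n. psi (g (lo i)) (Y i \<omega>) - psi (g th) (Y i \<omega>))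
        - trace (A ** (\<chi> a b. (1 / real n) * (\<Sum>i<n. Dpsi th (Y i \<omega>) $ a * d i $ b)))"
    unfolding CV_def UACV_def Let_def th_def lo_def by (simp add: sum_subtractf right_diff_distrib)
  then show ?thesis using loo_expansion by simp
qed

lemma sample_bounds_whp:
  assumes e: "e > 0"
  shows "\<exists>K. whp M (e + (e + (e + (e + (e + (e + e)))))) (sample_bounds K)"
proof -
  obtain K1 where E1: "whp M e (\<lambda>n \<omega>. norm (hat n \<omega> - \<theta>0) \<le> K1 * (1 / sqrt (real n)))"
    using bigOp_whp_bound[OF hat_rate e] by blast
  obtain K2 where E2: "whp M e (\<lambda>n \<omega>. Max ((\<lambda>i. norm (loo n i \<omega> - \<theta>0)) ` {..<n}) \<le> K2 * (1 / sqrt (real n)))"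
    using bigOp_whp_bound[OF loo_rate e] by blast
  obtain K3 where E3: "whp M e (\<lambda>n \<omega>. Max ((\<lambda>i. norm (Dphi (hat n \<omega>) (Y i \<omega>))) ` {..<n}) \<le> K3 * 1)"
    using bigOp_whp_bound[OF Dphi_bd e] by blast
  obtain K4 where E4: "whp M e (\<lambda>n \<omega>. Max ((\<lambda>i. norm (Dpsi (hat n \<omega>) (Y i \<omega>))) ` {..<n}) \<le> K4 * 1)"
    using bigOp_whp_bound[OF Dpsi_bd e] by blast
  obtain K5 where E5: "whp M e (\<lambda>n \<omega>. sample_mean wH n \<omega> \<le> K5)"
    using sample_mean_bounded[OF integrable_weights(1) weights_nonneg(1) e] by blast
  obtain K6 where E6: "whp M e (\<lambda>n \<omega>. sample_mean wV n \<omega> \<le> K6)"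
    using sample_mean_bounded[OF integrable_weights(2) weights_nonneg(2) e] by blast
  obtain K7 where E7: "whp M e (\<lambda>n \<omega>. sample_mean hess_env n \<omega> \<le> K7)"
    using sample_mean_bounded[OF integrable_weights(3) _ e] weights_nonneg(1) radius
    by (metis entry_norm_nonneg hess_env_def add_nonneg_nonneg mult_nonneg_nonneg less_imp_le)
  define K where "K = max K1 (max K2 (max K3 (max K4 (max K5 (max K6 K7)))))"
  have KK: "K1 \<le> K" "K2 \<le> K" "K3 \<le> K" "K4 \<le> K" "K5 \<le> K" "K6 \<le> K" "K7 \<le> K"
    unfolding K_def by (simp_all add: le_max_iff_disj)
  have rate: "K' * (1 / sqrt (real n)) \<le> K / sqrt (real n)" if "K' \<le> K" for K' n
    using that by (simp add: divide_right_mono)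
  have Max_le: "f i \<le> b" if "Max (f ` {..<n}) \<le> b" "i < n" for f :: "nat \<Rightarrow> real" and b n i
    using order_trans[OF Max_ge that(1)] that(2) by simp
  have "whp M (e + (e + (e + (e + (e + (e + e)))))) (\<lambda>n \<omega>.
        norm (hat n \<omega> - \<theta>0) \<le> K / sqrt (real n) \<and> (\<forall>i<n. norm (loo n i \<omega> - \<theta>0) \<le> K / sqrt (real n)) \<and>
        (\<forall>i<n. norm (Dphi (hat n \<omega>) (Y i \<omega>)) \<le> K) \<and> (\<forall>i<n. norm (Dpsi (hat n \<omega>) (Y i \<omega>)) \<le> K) \<and>
        sample_mean wH n \<omega> \<le> K \<and> sample_mean wV n \<omega> \<le> K \<and> sample_mean hess_env n \<omega> \<le> K)"
  proof (intro whp_conj)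
    show "whp M e (\<lambda>n \<omega>. norm (hat n \<omega> - \<theta>0) \<le> K / sqrt (real n))"
      using E1 by (rule whp_mono[where ?N0.0 = 0]) (use rate[OF KK(1)] in \<open>auto intro: order_trans\<close>)
    show "whp M e (\<lambda>n \<omega>. \<forall>i<n. norm (loo n i \<omega> - \<theta>0) \<le> K / sqrt (real n))"
    proof (rule whp_mono[OF E2, where ?N0.0 = 0])
      fix n \<omega> assume "Max ((\<lambda>i. norm (loo n i \<omega> - \<theta>0)) ` {..<n}) \<le> K2 * (1 / sqrt (real n))"
      from Max_le[of "\<lambda>i. norm (loo n i \<omega> - \<theta>0)", OF this]
      show "\<forall>i<n. norm (loo n i \<omega> - \<theta>0) \<le> K / sqrt (real n)"
        using rate[OF KK(2), of n] by (meson order_trans)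
    qed simp
    show "whp M e (\<lambda>n \<omega>. \<forall>i<n. norm (Dphi (hat n \<omega>) (Y i \<omega>)) \<le> K)"
    proof (rule whp_mono[OF E3, where ?N0.0 = 0])
      fix n \<omega> assume "Max ((\<lambda>i. norm (Dphi (hat n \<omega>) (Y i \<omega>))) ` {..<n}) \<le> K3 * 1"
      from Max_le[of "\<lambda>i. norm (Dphi (hat n \<omega>) (Y i \<omega>))", OF this]
      show "\<forall>i<n. norm (Dphi (hat n \<omega>) (Y i \<omega>)) \<le> K" using KK(3) by fastforce
    qed simp
    show "whp M e (\<lambda>n \<omega>. \<forall>i<n. norm (Dpsi (hat n \<omega>) (Y i \<omega>)) \<le> K)"
    proof (rule whp_mono[OF E4, where ?N0.0 = 0])
      fix n \<omega> assume "Max ((\<lambda>i. norm (Dpsi (hat n \<omega>) (Y i \<omega>))) ` {..<n}) \<le> K4 * 1"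
      from Max_le[of "\<lambda>i. norm (Dpsi (hat n \<omega>) (Y i \<omega>))", OF this]
      show "\<forall>i<n. norm (Dpsi (hat n \<omega>) (Y i \<omega>)) \<le> K" using KK(4) by fastforce
    qed simp
    show "whp M e (\<lambda>n \<omega>. sample_mean wH n \<omega> \<le> K)" using E5 by (rule whp_mono[where ?N0.0 = 0]) (use KK(5) in auto)
    show "whp M e (\<lambda>n \<omega>. sample_mean wV n \<omega> \<le> K)" using E6 by (rule whp_mono[where ?N0.0 = 0]) (use KK(6) in auto)
    show "whp M e (\<lambda>n \<omega>. sample_mean hess_env n \<omega> \<le> K)" using E7 by (rule whp_mono[where ?N0.0 = 0]) (use KK(7) in auto)
  qed
  then show ?thesis unfolding sample_bounds_def[abs_def] by blast
qed

lemma good_event_whp: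
  assumes c0: "c0 > 0" and e: "e > 0"
  shows "\<exists>K. whp M e (good c0 K)"
proof -
  define e' where "e' = e / 9"
  have e': "e' > 0" unfolding e'_def using e by simp
  obtain K where bounds: "whp M (e' + (e' + (e' + (e' + (e' + (e' + e')))))) (sample_bounds K)"
    using sample_bounds_whp[OF e'] by blast
  have envelope: "whp M e' (\<lambda>n \<omega>. \<forall>i<n. hess_env (Y i \<omega>) \<le> c0 / 8 * real n)"
    using c0 e' by (intro whp_max_small integrable_weights(3)) auto
  have hessian: "whp M e' (\<lambda>n \<omega>. entry_norm ((1 / real n) *\<^sub>R (\<Sum>k<n. Hphi \<theta>0 (Y k \<omega>)) - E0) \<le> c0 / 4)"
    using c0 e' by (intro whp_matrix_lln H0_int) auto
  have "eventually (\<lambda>n. 2 \<le> n \<and> K / sqrt (real n) \<le> \<rho> / 2 \<and> K * (2 * K / sqrt (real n)) \<le> c0 / 8)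
      sequentially"
    using radius c0 by (intro eventually_conj eventually_ge_at_top) real_asymp+
  then obtain N where N: "\<And>n. n \<ge> N \<Longrightarrow> 2 \<le> n \<and> K / sqrt (real n) \<le> \<rho> / 2 \<and> K * (2 * K / sqrt (real n)) \<le> c0 / 8"
    unfolding eventually_sequentially by blast
  from whp_conj[OF bounds whp_conj[OF envelope hessian]] have "whp M e (good c0 K)"
    by (rule whp_mono[where ?N0.0 = N]) (use N in \<open>auto simp: good_def e'_def\<close>)
  then show ?thesis by blast
qed

theorem cv_uacv_rate:
  "bigOp M (\<lambda>n \<omega>. CV psi g Y loo n \<omega> - UACV psi g Dpsi Dphi Hphi Y hat n \<omega>) (\<lambda>n. 1 / (real n)\<^sup>2)"
proof -
  obtain c0 where c0: "c0 > 0" and pd: "\<And>x. x \<bullet> (E0 *v x) \<ge> c0 * (norm x)\<^sup>2"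
    using pos_def_uniform[OF H0_pd] by blast
  show ?thesis unfolding bigOp_iff_whp
  proof (intro allI impI)
    fix e :: real assume "e > 0"
    then obtain K where "whp M e (good c0 K)" using good_event_whp[OF c0] by blast
    then have "whp M e (\<lambda>n \<omega>. \<bar>CV psi g Y loo n \<omega> - UACV psi g Dpsi Dphi Hphi Y hat n \<omega>\<bar>
                               \<le> loo_constant K (c0 / 2) * (1 / (real n)\<^sup>2))"
      by (rule whp_mono[where ?N0.0 = 0]) (use cv_error_on_good_event[OF c0 pd] in auto)
    then show "\<exists>K. whp M e (\<lambda>n \<omega>. \<bar>CV psi g Y loo n \<omega> - UACV psi g Dpsi Dphi Hphi Y hat n \<omega>\<bar>
                               \<le> K * (1 / (real n)\<^sup>2))" by blast
  qed
qed

end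

theorem mainTheorem3:
  fixes M :: "'a measure" and S :: "'y measure" and D :: "'y measure"
    and Y :: "nat \<Rightarrow> 'a \<Rightarrow> 'y"
    and \<Theta> :: "(real^'p) set" and \<theta>0 :: "real^'p"
    and phi :: "real^'p \<Rightarrow> 'y \<Rightarrow> real"
    and Dphi :: "real^'p \<Rightarrow> 'y \<Rightarrow> real^'p"
    and Hphi :: "real^'p \<Rightarrow> 'y \<Rightarrow> real^'p^'p"
    and Tphi :: "real^'p \<Rightarrow> 'y \<Rightarrow> real^'p \<Rightarrow> real^'p^'p"
    and g :: "real^'p \<Rightarrow> 'y \<Rightarrow> real"
    and psi :: "('y \<Rightarrow> real) \<Rightarrow> 'y \<Rightarrow> real"
    and Dpsi :: "real^'p \<Rightarrow> 'y \<Rightarrow> real^'p"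
    and Hpsi :: "real^'p \<Rightarrow> 'y \<Rightarrow> real^'p^'p"
    and hat :: "nat \<Rightarrow> 'a \<Rightarrow> real^'p"
    and loo :: "nat \<Rightarrow> nat \<Rightarrow> 'a \<Rightarrow> real^'p"
  assumes P: "prob_space M"
    \<comment> \<open>Y_0, Y_1, ... i.i.d. with common law D (the law with density f*)\<close>
    and indep: "prob_space.indep_vars M (\<lambda>_. S) Y UNIV"
    and ident: "\<And>i. distr M S (Y i) = D"
    \<comment> \<open>phi three times continuously differentiable in theta\<close>
    and phi_D1: "\<And>\<theta> y. \<theta> \<in> interior \<Theta> \<Longrightarrow> y \<in> space S \<Longrightarrow>
                   ((\<lambda>t. phi t y) has_derivative (\<lambda>h. Dphi \<theta> y \<bullet> h)) (at \<theta>)"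
    and phi_D2: "\<And>\<theta> y. \<theta> \<in> interior \<Theta> \<Longrightarrow> y \<in> space S \<Longrightarrow>
                   ((\<lambda>t. Dphi t y) has_derivative (\<lambda>h. Hphi \<theta> y *v h)) (at \<theta>)"
    and phi_D3: "\<And>\<theta> y. \<theta> \<in> interior \<Theta> \<Longrightarrow> y \<in> space S \<Longrightarrow>
                   ((\<lambda>t. Hphi t y) has_derivative Tphi \<theta> y) (at \<theta>)"
    and phi_D3_cont: "\<And>y i j k. y \<in> space S \<Longrightarrow>
                   continuous_on (interior \<Theta>) (\<lambda>t. Tphi t y (axis k 1) $ i $ j)"
    \<comment> \<open>third derivatives locally dominated near theta0 by an integrable function\<close>
    and phi_dom: "\<exists>r>0. \<exists>m. integrable D m \<and> ball \<theta>0 r \<subseteq> \<Theta> \<and>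
                   (\<forall>t\<in>ball \<theta>0 r. \<forall>y\<in>space S. \<forall>i j k. \<bar>Tphi t y (axis k 1) $ i $ j\<bar> \<le> m y)"
    \<comment> \<open>theta \<mapsto> psi(g^theta, y) twice continuously differentiable\<close>
    and psi_D1: "\<And>\<theta> y. \<theta> \<in> interior \<Theta> \<Longrightarrow> y \<in> space S \<Longrightarrow>
                   ((\<lambda>t. psi (g t) y) has_derivative (\<lambda>h. Dpsi \<theta> y \<bullet> h)) (at \<theta>)"
    and psi_D2: "\<And>\<theta> y. \<theta> \<in> interior \<Theta> \<Longrightarrow> y \<in> space S \<Longrightarrow>
                   ((\<lambda>t. Dpsi t y) has_derivative (\<lambda>h. Hpsi \<theta> y *v h)) (at \<theta>)"
    and psi_D2_cont: "\<And>y i j. y \<in> space S \<Longrightarrow>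
                   continuous_on (interior \<Theta>) (\<lambda>t. Hpsi t y $ i $ j)"
    and psi_dom: "\<exists>r>0. \<exists>m. integrable D m \<and> ball \<theta>0 r \<subseteq> \<Theta> \<and>
                   (\<forall>t\<in>ball \<theta>0 r. \<forall>y\<in>space S. \<forall>i j. \<bar>Hpsi t y $ i $ j\<bar> \<le> m y)"
    \<comment> \<open>theta0 = argmin Phi_infty, interior, with positive definite expected Hessian\<close>
    and Phi_inf_def: "\<And>\<theta>. \<theta> \<in> \<Theta> \<Longrightarrow> integrable D (phi \<theta>)"
    and theta0_in: "\<theta>0 \<in> interior \<Theta>"
    and theta0_min: "\<And>\<theta>. \<theta> \<in> \<Theta> \<Longrightarrow> integral\<^sup>L D (phi \<theta>0) \<le> integral\<^sup>L D (phi \<theta>)"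
    and H0_int: "\<And>i j. integrable D (\<lambda>y. Hphi \<theta>0 y $ i $ j)"
    and H0_pd: "\<And>x. x \<noteq> 0 \<Longrightarrow>
                   x \<bullet> ((\<chi> i j. integral\<^sup>L D (\<lambda>y. Hphi \<theta>0 y $ i $ j)) *v x) > 0"
    \<comment> \<open>hat theta and all hat theta_{-i} exist, are interior minimisers\<close>
    and hat_in: "\<And>n \<omega>. n \<ge> 2 \<Longrightarrow> \<omega> \<in> space M \<Longrightarrow> hat n \<omega> \<in> interior \<Theta>"
    and hat_min: "\<And>n \<omega> \<theta>. n \<ge> 2 \<Longrightarrow> \<omega> \<in> space M \<Longrightarrow> \<theta> \<in> \<Theta> \<Longrightarrow>
                   PhiEmp phi Y n \<omega> (hat n \<omega>) \<le> PhiEmp phi Y n \<omega> \<theta>"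
    and loo_in: "\<And>n i \<omega>. n \<ge> 2 \<Longrightarrow> i < n \<Longrightarrow> \<omega> \<in> space M \<Longrightarrow> loo n i \<omega> \<in> interior \<Theta>"
    and loo_min: "\<And>n i \<omega> \<theta>. n \<ge> 2 \<Longrightarrow> i < n \<Longrightarrow> \<omega> \<in> space M \<Longrightarrow> \<theta> \<in> \<Theta> \<Longrightarrow>
                   PhiLoo phi Y n i \<omega> (loo n i \<omega>) \<le> PhiLoo phi Y n i \<omega> \<theta>"
    \<comment> \<open>root-n rates\<close>
    and hat_rate: "bigOp M (\<lambda>n \<omega>. norm (hat n \<omega> - \<theta>0)) (\<lambda>n. 1 / sqrt (real n))"
    and loo_rate: "bigOp M (\<lambda>n \<omega>. Max ((\<lambda>i. norm (loo n i \<omega> - \<theta>0)) ` {..<n}))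
                     (\<lambda>n. 1 / sqrt (real n))"
    \<comment> \<open>bounded gradients at hat theta\<close>
    and Dphi_bd: "bigOp M (\<lambda>n \<omega>. Max ((\<lambda>i. norm (Dphi (hat n \<omega>) (Y i \<omega>))) ` {..<n})) (\<lambda>n. 1)"
    and Dpsi_bd: "bigOp M (\<lambda>n \<omega>. Max ((\<lambda>i. norm (Dpsi (hat n \<omega>) (Y i \<omega>))) ` {..<n})) (\<lambda>n. 1)"
  shows "bigOp M (\<lambda>n \<omega>. CV psi g Y loo n \<omega> - UACV psi g Dpsi Dphi Hphi Y hat n \<omega>)
                 (\<lambda>n. 1 / (real n)^2)"
proof -
  obtain r1 m1 where r1: "r1 > 0" "integrable D m1" "ball \<theta>0 r1 \<subseteq> \<Theta>"
    and m1: "\<forall>t\<in>ball \<theta>0 r1. \<forall>y\<in>space S. \<forall>i j k. \<bar>Tphi t y (axis k 1) $ i $ j\<bar> \<le> m1 y"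
    using phi_dom by blast
  obtain r2 m2 where r2: "r2 > 0" "integrable D m2"
    and m2: "\<forall>t\<in>ball \<theta>0 r2. \<forall>y\<in>space S. \<forall>i j. \<bar>Hpsi t y $ i $ j\<bar> \<le> m2 y"
    using psi_dom by blast
  have "ball \<theta>0 (min r1 r2) \<subseteq> interior \<Theta>"
    using r1(3) by (intro interior_maximal) auto
  then interpret loo_cv_model M S D Y \<Theta> \<theta>0 "min r1 r2" phi Dphi Hphi Tphi g psi Dpsi Hpsi m1 m2 hat loo
    using P indep ident phi_D1 phi_D2 phi_D3 psi_D1 psi_D2 r1 r2 m1 m2 H0_int H0_pd
      hat_in hat_min loo_in loo_min hat_rate loo_rate Dphi_bd Dpsi_bd
    by (intro loo_cv_model.intro iid_sample.intro iid_sample_axioms.intro loo_cv_model_axioms.intro) auto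
  show ?thesis by (rule cv_uacv_rate)
qed

end
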